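(* Let $K$ be a balanced graph with $e_K\ge1$. There are constants $\beta,B,C>0$ such that, for all $p=p(n)\in[0,1]$ with $n^{-1/d_K}\ll p=O(n^{\beta-1/d_K})$, the following holds with probability tending to $1$ as $n\to\infty$ in $\mathbb{G}_{n,p}$, writing $\lambda:=np^{d_K}$: (i) If $G\subseteq K$ is primal for $K$, then any two copies of $G$ are either vertex-disjoint or their intersection is isomorphic to a primal subgraph of $K$. (ii) If $G_0\subsetneq G_1$ are both primal for $K$ and there is no primal $F$ with $G_0\subsetneq F\subsetneq G_1$, then for every copy $G_0'$ of $G_0$, all copies of $G_1$ containing $G_0'$ are vertex-disjoint outside of $V(G_0')$. (iii) If $G_0,G_1$ are as in (ii), then every copy of $G_0$ is contained in at most $B\lambda^{v_{G_1}-v_{G_0}}$ copies of $G_1$. (iv) If $v\in V(K)$ and $G^{(v)}\subseteq K$ is a minimal (with respect to inclusion) primal subgraph of $K$ containing $v$, then for each vertex $x\in[n]$ there is at most one copy of $G^{(v)}$ in which $v$ is mapped onto $x$ (i.e., at most one $(v,G^{(v)})$-extension of $x$). (v) If $G_{\min}\subseteq K$ is a primal subgraph of $K$ with the smallest number of vertices, then every vertex $x\in[n]$ is contained in at most $C\lambda^{v_K-v_{G_{\min}}}$ copies of $K$.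
   Context: $\mathbb{G}_{n,p}$ is the binomial random graph on $[n]$. For a graph $F$ with $v_F\ge1$ vertices and $e_F$ edges, $d_F=e_F/v_F$. A subgraph $J\subseteq K$ with $v_J\ge1$ is primal for $K$ if it maximizes $d_J$ among all such subgraphs; $K$ is balanced if $K$ itself is primal. Copies are subgraphs of $\mathbb{G}_{n,p}$ isomorphic to the given graph. $a\ll b$ means $a/b\to0$ as $n\to\infty$. *)

theory Defs
  imports Complex_Main "HOL-Library.Landau_Symbols"
begin

definition graph :: "'v set \<times> 'v set set \<Rightarrow> bool" where
  "graph G \<longleftrightarrow> finite (fst G) \<and>
     (\<forall>e\<in>snd G. \<exists>a b. a \<noteq> b \<and> a \<in> fst G \<and> b \<in> fst G \<and> e = {a, b})"

definition graph_le :: "'v set \<times> 'v set set \<Rightarrow> 'v set \<times> 'v set set \<Rightarrow> bool" where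
  "graph_le H G \<longleftrightarrow> fst H \<subseteq> fst G \<and> snd H \<subseteq> snd G"

definition subgraph :: "'v set \<times> 'v set set \<Rightarrow> 'v set \<times> 'v set set \<Rightarrow> bool" where
  "subgraph H G \<longleftrightarrow> graph H \<and> graph_le H G"

definition dens :: "'v set \<times> 'v set set \<Rightarrow> real" where
  "dens G = real (card (snd G)) / real (card (fst G))"

definition primal :: "'v set \<times> 'v set set \<Rightarrow> 'v set \<times> 'v set set \<Rightarrow> bool" where
  "primal J K \<longleftrightarrow> subgraph J K \<and> fst J \<noteq> {} \<and>
     (\<forall>J'. subgraph J' K \<and> fst J' \<noteq> {} \<longrightarrow> dens J' \<le> dens J)"

definition balanced :: "'v set \<times> 'v set set \<Rightarrow> bool" where
  "balanced K \<longleftrightarrow> primal K K"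

definition iso_map :: "('v \<Rightarrow> 'w) \<Rightarrow> 'v set \<times> 'v set set \<Rightarrow> 'w set \<times> 'w set set \<Rightarrow> bool" where
  "iso_map \<phi> F H \<longleftrightarrow> bij_betw \<phi> (fst F) (fst H) \<and>
     (\<forall>a\<in>fst F. \<forall>b\<in>fst F. {a, b} \<in> snd F \<longleftrightarrow> {\<phi> a, \<phi> b} \<in> snd H)"

definition isomorphic :: "'v set \<times> 'v set set \<Rightarrow> 'w set \<times> 'w set set \<Rightarrow> bool" where
  "isomorphic F H \<longleftrightarrow> (\<exists>\<phi>. iso_map \<phi> F H)"

definition all_pairs :: "nat \<Rightarrow> nat set set" where
  "all_pairs n = {e. \<exists>a b. a \<noteq> b \<and> a \<in> {1..n} \<and> b \<in> {1..n} \<and> e = {a, b}}"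

text \<open>Probability that G(n,p) (edge set E \<subseteq> all_pairs n, each pair independently with prob. p)
  satisfies P.\<close>
definition gnp_prob :: "nat \<Rightarrow> real \<Rightarrow> (nat set set \<Rightarrow> bool) \<Rightarrow> real" where
  "gnp_prob n p P = (\<Sum>E\<in>{E. E \<subseteq> all_pairs n \<and> P E}.
      p ^ card E * (1 - p) ^ (card (all_pairs n) - card E))"

definition copies :: "'v set \<times> 'v set set \<Rightarrow> nat \<Rightarrow> nat set set \<Rightarrow> (nat set \<times> nat set set) set" where
  "copies F n E = {H. subgraph H ({1..n}, E) \<and> isomorphic F H}"

definition graph_inter :: "'v set \<times> 'v set set \<Rightarrow> 'v set \<times> 'v set set \<Rightarrow> 'v set \<times> 'v set set" where
  "graph_inter H1 H2 = (fst H1 \<inter> fst H2, snd H1 \<inter> snd H2)"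

definition primal_cover :: "'v set \<times> 'v set set \<Rightarrow> 'v set \<times> 'v set set \<Rightarrow> 'v set \<times> 'v set set \<Rightarrow> bool" where
  "primal_cover K G0 G1 \<longleftrightarrow> primal G0 K \<and> primal G1 K \<and> graph_le G0 G1 \<and> G0 \<noteq> G1 \<and>
     \<not> (\<exists>F. primal F K \<and> graph_le G0 F \<and> F \<noteq> G0 \<and> graph_le F G1 \<and> F \<noteq> G1)"

definition prop_i :: "'v set \<times> 'v set set \<Rightarrow> nat \<Rightarrow> nat set set \<Rightarrow> bool" where
  "prop_i K n E \<longleftrightarrow> (\<forall>G. primal G K \<longrightarrow> (\<forall>H1\<in>copies G n E. \<forall>H2\<in>copies G n E.
      fst H1 \<inter> fst H2 = {} \<or> (\<exists>J. primal J K \<and> isomorphic (graph_inter H1 H2) J)))"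

definition prop_ii :: "'v set \<times> 'v set set \<Rightarrow> nat \<Rightarrow> nat set set \<Rightarrow> bool" where
  "prop_ii K n E \<longleftrightarrow> (\<forall>G0 G1. primal_cover K G0 G1 \<longrightarrow>
     (\<forall>H0\<in>copies G0 n E. \<forall>H1\<in>copies G1 n E. \<forall>H2\<in>copies G1 n E.
        graph_le H0 H1 \<and> graph_le H0 H2 \<and> H1 \<noteq> H2 \<longrightarrow>
        (fst H1 - fst H0) \<inter> (fst H2 - fst H0) = {}))"

definition prop_iii :: "'v set \<times> 'v set set \<Rightarrow> real \<Rightarrow> real \<Rightarrow> nat \<Rightarrow> nat set set \<Rightarrow> bool" where
  "prop_iii K B lam n E \<longleftrightarrow> (\<forall>G0 G1. primal_cover K G0 G1 \<longrightarrow>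
     (\<forall>H0\<in>copies G0 n E.
        real (card {H1\<in>copies G1 n E. graph_le H0 H1})
          \<le> B * lam ^ (card (fst G1) - card (fst G0))))"

definition prop_iv :: "'v set \<times> 'v set set \<Rightarrow> nat \<Rightarrow> nat set set \<Rightarrow> bool" where
  "prop_iv K n E \<longleftrightarrow> (\<forall>v\<in>fst K. \<forall>Gv. primal Gv K \<and> v \<in> fst Gv \<and>
       \<not> (\<exists>J. primal J K \<and> v \<in> fst J \<and> graph_le J Gv \<and> J \<noteq> Gv) \<longrightarrow>
     (\<forall>x\<in>{1..n}. card {H\<in>copies Gv n E. \<exists>\<phi>. iso_map \<phi> Gv H \<and> \<phi> v = x} \<le> 1))"

definition prop_v :: "'v set \<times> 'v set set \<Rightarrow> real \<Rightarrow> real \<Rightarrow> nat \<Rightarrow> nat set set \<Rightarrow> bool" where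
  "prop_v K C lam n E \<longleftrightarrow> (\<forall>Gmin. primal Gmin K \<and>
       (\<forall>J. primal J K \<longrightarrow> card (fst Gmin) \<le> card (fst J)) \<longrightarrow>
     (\<forall>x\<in>{1..n}. real (card {H\<in>copies K n E. x \<in> fst H})
        \<le> C * lam ^ (card (fst K) - card (fst Gmin))))"

end

theory Submission
  imports Defs "HOL-Real_Asymp.Real_Asymp"
begin

text \<open>Write \<open>d\<close> for the density of \<open>K\<close> and call an edge set on \<open>[n]\<close> locally sparse if every set
  \<open>V\<close> of at most \<open>2 v_K\<close> vertices spans at most \<open>d |V|\<close> edges. A denser \<open>V\<close> spans at least
  \<open>d |V| + 1/v_K\<close> edges, so by a union bound local sparsity fails with probability
  \<open>O(\<Sum>k. n^k p^(d k + 1/v_K))\<close>, which tends to \<open>0\<close> when \<open>p = O(n^(\<beta> - 1/d))\<close> for small \<open>\<beta>\<close>.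

  Local sparsity alone gives (i), (ii) and (iv): two overlapping copies of a primal graph \<open>G\<close>
  span at most \<open>2 v_K\<close> vertices, so their intersection has density at least \<open>d\<close> and pulls back
  to a primal subgraph of \<open>G\<close>. For (ii) this is combined with a rank on primal vertex sets: they
  are closed under union and under nonempty intersection, so every vertex has a least primal set
  containing it, and the number of distinct such hulls inside a primal set grows strictly with the
  set, by exactly one along a cover, and is invariant under isomorphism.

  By (ii), more than \<open>B \<lambda>^m\<close> extensions of a copy of \<open>G\<^sub>0\<close> to copies of its cover \<open>G\<^sub>1\<close> yield
  \<open>k > B \<lambda>^m\<close> extensions that are pairwise disjoint outside it, an event of probability at most
  \<open>(c \<lambda>^m)^k / k! \<le> 2^(-\<lambda>)\<close>. Finally (v) follows from (iii) and (iv) by climbing along covers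
  from the least primal graph at a vertex up to \<open>K\<close>.\<close>

section \<open>Graphs, images and copies\<close>

type_synonym 'v graph = "'v set \<times> 'v set set"

definition graph_image :: "('v \<Rightarrow> 'w) \<Rightarrow> 'v graph \<Rightarrow> 'w graph" where
  "graph_image f G = (f ` fst G, (\<lambda>e. f ` e) ` snd G)"

lemma fst_graph_image [simp]: "fst (graph_image f G) = f ` fst G"
  and snd_graph_image [simp]: "snd (graph_image f G) = (\<lambda>e. f ` e) ` snd G"
  by (auto simp: graph_image_def)

lemma graph_edge_subset: "graph G \<Longrightarrow> e \<in> snd G \<Longrightarrow> e \<subseteq> fst G"
  by (auto simp: graph_def)

lemma graph_edges_subset_Pow: "graph G \<Longrightarrow> snd G \<subseteq> Pow (fst G)"
  by (auto simp: graph_def)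

lemma graph_finite_vertices: "graph G \<Longrightarrow> finite (fst G)"
  by (auto simp: graph_def)

lemma graph_finite_edges: "graph G \<Longrightarrow> finite (snd G)"
  by (meson finite_Pow_iff finite_subset graph_edges_subset_Pow graph_finite_vertices)

lemma graph_if_edges_within:
  "graph_le S G \<Longrightarrow> graph G \<Longrightarrow> (\<forall>e\<in>snd S. e \<subseteq> fst S) \<Longrightarrow> graph S"
  unfolding graph_def graph_le_def
  by (metis (no_types, lifting) finite_subset insert_subset subset_iff)

lemma graph_le_trans: "graph_le A B \<Longrightarrow> graph_le B C \<Longrightarrow> graph_le A C"
  by (auto simp: graph_le_def)

lemma graph_le_eq_if_card_eq:
  assumes "graph_le A B" "graph B" "card (fst A) = card (fst B)" "card (snd A) = card (snd B)"
  shows "A = B"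
  using assms graph_finite_vertices[OF assms(2)] graph_finite_edges[OF assms(2)]
  by (auto simp: graph_le_def prod_eq_iff dest: card_subset_eq)

lemma graph_graph_image: "graph G \<Longrightarrow> inj_on f (fst G) \<Longrightarrow> graph (graph_image f G)"
  unfolding graph_def by (fastforce simp: inj_on_def)

lemma inj_on_edge_image: "graph G \<Longrightarrow> inj_on f (fst G) \<Longrightarrow> inj_on (\<lambda>e. f ` e) (snd G)"
  by (meson graph_edges_subset_Pow inj_on_image_Pow inj_on_subset)

lemma card_vertices_graph_image: "inj_on f (fst G) \<Longrightarrow> card (fst (graph_image f G)) = card (fst G)"
  by (simp add: card_image)

lemma card_edges_graph_image:
  "graph G \<Longrightarrow> inj_on f (fst G) \<Longrightarrow> card (snd (graph_image f G)) = card (snd G)"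
  using card_image[OF inj_on_edge_image] by simp

lemma graph_le_graph_image: "graph_le S G \<Longrightarrow> graph_le (graph_image f S) (graph_image f G)"
  by (auto simp: graph_le_def)

lemma graph_image_graph_image: "graph_image g (graph_image f G) = graph_image (g \<circ> f) G"
  by (simp add: graph_image_def image_comp)

lemma graph_image_inverse:
  assumes "graph S" "\<And>x. x \<in> fst S \<Longrightarrow> g (f x) = x"
  shows "graph_image g (graph_image f S) = S"
proof -
  have id: "(g \<circ> f) ` A = A" if "A \<subseteq> fst S" for A
    using that assms(2) by (force simp: image_iff)
  have "(\<lambda>e. (g \<circ> f) ` e) ` snd S = snd S"
    using id graph_edge_subset[OF assms(1)] by (force simp: image_iff)
  then have "graph_image (g \<circ> f) S = S"
    unfolding graph_image_def by (simp only: id[OF order_refl] prod.collapse)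
  then show ?thesis by (simp only: graph_image_graph_image)
qed

lemma iso_map_graph_image:
  assumes "graph G" and inj: "inj_on f (fst G)"
  shows "iso_map f G (graph_image f G)"
  unfolding iso_map_def
proof (intro conjI ballI)
  show "bij_betw f (fst G) (fst (graph_image f G))" using inj by (simp add: bij_betw_def)
  fix a b assume ab: "a \<in> fst G" "b \<in> fst G"
  show "{a, b} \<in> snd G \<longleftrightarrow> {f a, f b} \<in> snd (graph_image f G)"
  proof
    assume "{a, b} \<in> snd G"
    then have "f ` {a, b} \<in> (\<lambda>e. f ` e) ` snd G" by (rule imageI)
    then show "{f a, f b} \<in> snd (graph_image f G)" by simp
  next
    assume "{f a, f b} \<in> snd (graph_image f G)"
    then obtain e where e: "e \<in> snd G" "f ` {a, b} = f ` e" by auto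
    have "e \<in> Pow (fst G)" using e assms(1) graph_edges_subset_Pow by blast
    moreover have "{a, b} \<in> Pow (fst G)" using ab by simp
    ultimately have "{a, b} = e" using inj_on_image_Pow[OF inj] e(2) by (meson inj_onD)
    then show "{a, b} \<in> snd G" using e by simp
  qed
qed

lemma iso_map_inj_on: "iso_map \<phi> F H \<Longrightarrow> inj_on \<phi> (fst F)"
  by (simp add: iso_map_def bij_betw_def)

lemma iso_map_comp:
  assumes "iso_map f A B" "iso_map g B C"
  shows "iso_map (g \<circ> f) A C"
proof -
  have "f a \<in> fst B" if "a \<in> fst A" for a
    using assms(1) that by (auto simp: iso_map_def dest: bij_betwE)
  then show ?thesis
    using assms by (auto simp: iso_map_def intro: bij_betw_trans)
qed

lemma graph_image_if_iso_map:
  assumes "graph F" "graph H" "iso_map \<phi> F H"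
  shows "H = graph_image \<phi> F"
proof -
  have vertices: "fst H = \<phi> ` fst F" and
    edges: "\<And>a b. a \<in> fst F \<Longrightarrow> b \<in> fst F \<Longrightarrow> {a, b} \<in> snd F \<longleftrightarrow> {\<phi> a, \<phi> b} \<in> snd H"
    using assms(3) by (auto simp: iso_map_def bij_betw_def)
  have "snd H = (\<lambda>e. \<phi> ` e) ` snd F"
  proof (intro equalityI subsetI)
    fix e assume "e \<in> snd H"
    then obtain a b where "a \<in> fst F" "b \<in> fst F" "e = {\<phi> a, \<phi> b}"
      using assms(2) vertices by (auto simp: graph_def)
    with edges \<open>e \<in> snd H\<close> show "e \<in> (\<lambda>e. \<phi> ` e) ` snd F"
      by (auto intro: image_eqI[where x="{a, b}"])
  next
    fix e assume "e \<in> (\<lambda>e. \<phi> ` e) ` snd F"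
    with assms(1) edges show "e \<in> snd H" by (auto simp: graph_def)
  qed
  then show ?thesis using vertices by (simp add: graph_image_def prod_eq_iff)
qed

definition sparse :: "real \<Rightarrow> 'v graph \<Rightarrow> bool" where
  "sparse d F \<longleftrightarrow> (\<forall>S. subgraph S F \<longrightarrow> real (card (snd S)) \<le> d * real (card (fst S)))"

lemma sparse_subgraph: "sparse d F \<Longrightarrow> subgraph S F \<Longrightarrow> sparse d S"
  unfolding sparse_def subgraph_def using graph_le_trans by blast

lemma sparse_graph_image:
  assumes "graph F" and inj: "inj_on f (fst F)" and "sparse d F"
  shows "sparse d (graph_image f F)"
  unfolding sparse_def
proof (intro allI impI)
  fix S assume "subgraph S (graph_image f F)"
  then have S: "graph S" "graph_le S (graph_image f F)" by (auto simp: subgraph_def)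
  define g where "g = inv_into (fst F) f"
  have "inj_on g (f ` fst F)" unfolding g_def by (rule inj_on_inv_into) simp
  then have inj_g: "inj_on g (fst S)"
    using S(2) by (auto simp: graph_le_def intro: inj_on_subset)
  have "graph_image g (graph_image f F) = F"
    unfolding g_def using assms by (intro graph_image_inverse) auto
  then have "subgraph (graph_image g S) F"
    using graph_le_graph_image[OF S(2), of g] graph_graph_image[OF S(1) inj_g]
    by (simp add: subgraph_def)
  then have "real (card (snd (graph_image g S))) \<le> d * real (card (fst (graph_image g S)))"
    using \<open>sparse d F\<close> unfolding sparse_def by blast
  then show "real (card (snd S)) \<le> d * real (card (fst S))"
    by (simp only: card_vertices_graph_image[OF inj_g] card_edges_graph_image[OF S(1) inj_g])
qed

lemma copiesE:
  assumes "H \<in> copies G n E" "graph G"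
  obtains \<phi> where "iso_map \<phi> G H" "inj_on \<phi> (fst G)" "H = graph_image \<phi> G"
proof -
  obtain \<phi> where "iso_map \<phi> G H" "graph H"
    using assms(1) by (auto simp: copies_def isomorphic_def subgraph_def)
  then show ?thesis
    using that graph_image_if_iso_map[OF assms(2)] iso_map_inj_on by blast
qed

lemma copies_graph: "H \<in> copies G n E \<Longrightarrow> graph H"
  by (simp add: copies_def subgraph_def)

lemma copies_vertices: "H \<in> copies G n E \<Longrightarrow> fst H \<subseteq> {1..n}"
  by (simp add: copies_def subgraph_def graph_le_def)

lemma copies_edges: "H \<in> copies G n E \<Longrightarrow> snd H \<subseteq> E"
  by (simp add: copies_def subgraph_def graph_le_def)

lemma copies_mono: "E \<subseteq> E' \<Longrightarrow> copies G n E \<subseteq> copies G n E'"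
  by (auto simp: copies_def subgraph_def graph_le_def)

lemma finite_copies: "finite (copies G n E)"
proof (rule finite_subset)
  show "copies G n E \<subseteq> Pow {1..n} \<times> Pow (Pow {1..n})"
  proof
    fix H assume H: "H \<in> copies G n E"
    have "fst H \<subseteq> {1..n}" "snd H \<subseteq> Pow (fst H)"
      using copies_vertices[OF H] graph_edges_subset_Pow[OF copies_graph[OF H]] .
    then show "H \<in> Pow {1..n} \<times> Pow (Pow {1..n})" by (cases H) auto
  qed
qed simp

lemma card_copies:
  assumes "H \<in> copies G n E" "graph G"
  shows "card (fst H) = card (fst G)" "card (snd H) = card (snd G)"
  using assms card_vertices_graph_image card_edges_graph_image[OF assms(2)]
  by (metis copiesE)+

lemma graph_image_in_copies:
  assumes "graph G" "inj_on \<phi> (fst G)" "\<phi> ` fst G \<subseteq> {1..n}" "(\<lambda>e. \<phi> ` e) ` snd G \<subseteq> E"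
  shows "graph_image \<phi> G \<in> copies G n E"
  using graph_graph_image[OF assms(1,2)] iso_map_graph_image[OF assms(1,2)] assms(3,4)
  unfolding copies_def subgraph_def graph_le_def isomorphic_def by auto

lemma graph_image_subgraph_in_copies:
  assumes "inj_on \<phi> (fst G)" "graph_image \<phi> G \<in> copies G n E" "graph_le F G" "graph F"
  shows "graph_image \<phi> F \<in> copies F n E"
proof (rule graph_image_in_copies[OF assms(4)])
  show "inj_on \<phi> (fst F)" using assms(1,3) by (auto simp: graph_le_def intro: inj_on_subset)
  have "fst F \<subseteq> fst G" "snd F \<subseteq> snd G" using assms(3) by (auto simp: graph_le_def)
  then show "\<phi> ` fst F \<subseteq> {1..n}" "(\<lambda>e. \<phi> ` e) ` snd F \<subseteq> E"
    using copies_vertices[OF assms(2)] copies_edges[OF assms(2)]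
    by (metis fst_graph_image image_mono order_trans, metis snd_graph_image image_mono order_trans)
qed

lemma copies_eq_if_graph_le:
  "H1 \<in> copies G n E \<Longrightarrow> H2 \<in> copies G n E \<Longrightarrow> graph G \<Longrightarrow> graph_le H1 H2 \<Longrightarrow> H1 = H2"
  by (metis card_copies copies_graph graph_le_eq_if_card_eq)

lemma graph_graph_inter: "graph H1 \<Longrightarrow> graph H2 \<Longrightarrow> graph (graph_inter H1 H2)"
  by (rule graph_if_edges_within[of _ H1])
    (auto simp: graph_inter_def graph_le_def dest: graph_edge_subset)

lemma graph_le_inter1: "graph_le (graph_inter H1 H2) H1"
  and graph_le_inter2: "graph_le (graph_inter H1 H2) H2"
  by (auto simp: graph_inter_def graph_le_def)

section \<open>Primal subgraphs of a balanced graph\<close>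

locale balanced_graph =
  fixes K :: "'a graph"
  assumes graph_K: "graph K" and balanced_K: "balanced K" and edge_K: "card (snd K) \<ge> 1"
begin

definition d :: real where "d = dens K"

lemma finite_vertices_K: "finite (fst K)"
  using graph_K by (rule graph_finite_vertices)

lemma finite_edges_K: "finite (snd K)"
  using graph_K by (rule graph_finite_edges)

lemma card_vertices_K_pos: "card (fst K) > 0"
proof -
  have "fst K \<noteq> {}"
  proof
    assume "fst K = {}"
    then have "snd K = {}" using graph_K by (auto simp: graph_def)
    then show False using edge_K by simp
  qed
  then show ?thesis using finite_vertices_K by (simp add: card_gt_0_iff)
qed

lemma d_pos: "d > 0"
  using card_vertices_K_pos edge_K unfolding d_def dens_def by simp

lemma primal_K: "primal K K"
  using balanced_K by (simp add: balanced_def)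

lemma sparse_K: "sparse d K"
  unfolding sparse_def
proof (intro allI impI)
  fix S assume S: "subgraph S K"
  show "real (card (snd S)) \<le> d * real (card (fst S))"
  proof (cases "fst S = {}")
    case True
    then have "snd S = {}" using S by (auto simp: subgraph_def graph_def)
    then show ?thesis using True by simp
  next
    case False
    then have "real (card (fst S)) > 0"
      using S graph_finite_vertices[of S] by (auto simp: subgraph_def card_gt_0_iff)
    moreover have "dens S \<le> d" using primal_K S False unfolding primal_def d_def by blast
    ultimately show ?thesis by (simp add: dens_def divide_le_eq mult.commute)
  qed
qed

lemma card_edges_le: "subgraph S K \<Longrightarrow> real (card (snd S)) \<le> d * real (card (fst S))"
  using sparse_K by (simp add: sparse_def)

lemma primal_iff:
  "primal J K \<longleftrightarrow> subgraph J K \<and> fst J \<noteq> {} \<and> real (card (snd J)) = d * real (card (fst J))"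
proof -
  have pos: "real (card (fst X)) > 0" if "subgraph X K" "fst X \<noteq> {}" for X
    using that graph_finite_vertices[of X] by (auto simp: subgraph_def card_gt_0_iff)
  have dens_K_le: "dens K \<le> dens J \<longleftrightarrow> d * real (card (fst J)) \<le> real (card (snd J))"
    if "subgraph J K" "fst J \<noteq> {}"
    using pos[OF that] by (simp add: dens_def d_def le_divide_eq)
  have dens_le_K: "dens J' \<le> dens J" if "real (card (snd J)) = d * real (card (fst J))"
    "subgraph J' K" "fst J' \<noteq> {}" "subgraph J K" "fst J \<noteq> {}" for J'
    using that pos[OF that(4,5)] card_edges_le[OF that(2)] pos[OF that(2,3)]
    by (simp add: dens_def d_def divide_le_eq mult.commute)
  have "subgraph K K" "fst K \<noteq> {}"
    using graph_K card_vertices_K_pos by (auto simp: subgraph_def graph_le_def)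
  then show ?thesis
    unfolding primal_def using card_edges_le[of J] dens_K_le dens_le_K by (meson order_antisym)
qed

lemma primalI:
  "subgraph J K \<Longrightarrow> fst J \<noteq> {} \<Longrightarrow> d * real (card (fst J)) \<le> real (card (snd J)) \<Longrightarrow> primal J K"
  using card_edges_le[of J] by (auto simp: primal_iff)

lemma primal_graph: "primal G K \<Longrightarrow> graph G"
  by (simp add: primal_def subgraph_def)

lemma primal_graph_le_K: "primal G K \<Longrightarrow> graph_le G K"
  by (simp add: primal_def subgraph_def)

lemma primal_card_vertices_le: "primal G K \<Longrightarrow> card (fst G) \<le> card (fst K)"
  using finite_vertices_K primal_graph_le_K[of G] by (auto simp: graph_le_def intro: card_mono)

lemma finite_primal: "finite {J. primal J K}"
proof (rule finite_subset)
  show "{J. primal J K} \<subseteq> Pow (fst K) \<times> Pow (snd K)"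
    by (auto simp: primal_def subgraph_def graph_le_def)
qed (simp add: finite_vertices_K finite_edges_K)

lemma card_primal_pos: "card {J. primal J K} > 0"
  using finite_primal primal_K card_gt_0_iff by blast

lemma card_primal_mult_ge_1: "B \<ge> 1 \<Longrightarrow> real (card {J. primal J K}) * B \<ge> 1"
  using card_primal_pos by (metis One_nat_def Suc_leI mult_mono' of_nat_1 of_nat_le_iff mult_1_left zero_le_one)

definition induced :: "'a set \<Rightarrow> 'a graph" where
  "induced S = (S, {e \<in> snd K. e \<subseteq> S})"

lemma fst_induced [simp]: "fst (induced S) = S"
  by (simp add: induced_def)

lemma graph_le_induced: "A \<subseteq> B \<Longrightarrow> graph_le (induced A) (induced B)"
  by (auto simp: induced_def graph_le_def)

lemma subgraph_induced: "S \<subseteq> fst K \<Longrightarrow> subgraph (induced S) K"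
  unfolding subgraph_def induced_def
  by (intro conjI graph_if_edges_within[OF _ graph_K]) (auto simp: graph_le_def)

lemma primal_induced: assumes "primal J K" shows "J = induced (fst J)"
proof -
  have S: "subgraph J K" and e: "real (card (snd J)) = d * real (card (fst J))"
    using assms primal_iff by auto
  have sub: "fst J \<subseteq> fst K" using S by (auto simp: subgraph_def graph_le_def)
  have le: "snd J \<subseteq> snd (induced (fst J))"
    using S graph_edge_subset[of J] by (auto simp: induced_def subgraph_def graph_le_def)
  have "real (card (snd (induced (fst J)))) \<le> d * real (card (fst J))"
    using card_edges_le[OF subgraph_induced[OF sub]] by simp
  moreover have "finite (snd (induced (fst J)))" using finite_edges_K by (simp add: induced_def)
  ultimately have "snd J = snd (induced (fst J))" using le e
    by (metis card_mono card_subset_eq of_nat_le_iff order_antisym_conv)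
  then show ?thesis by (simp add: prod_eq_iff)
qed

lemma primal_eq_if_fst_eq: "primal A K \<Longrightarrow> primal B K \<Longrightarrow> fst A = fst B \<Longrightarrow> A = B"
  using primal_induced by metis

lemma primal_card_less:
  assumes "primal A K" "primal B K" "graph_le A B" "A \<noteq> B"
  shows "card (fst A) < card (fst B)"
proof -
  have "fst A \<noteq> fst B" using assms primal_eq_if_fst_eq[of A B] by blast
  then have "fst A \<subset> fst B" using assms(3) by (auto simp: graph_le_def)
  then show ?thesis using graph_finite_vertices[OF primal_graph[OF assms(2)]] by (rule psubset_card_mono[rotated])
qed

definition primal_set :: "'a set \<Rightarrow> bool" where
  "primal_set S \<longleftrightarrow> primal (induced S) K"

lemma primal_set_iff:
  "primal_set S \<longleftrightarrow> S \<subseteq> fst K \<and> S \<noteq> {} \<and> real (card (snd (induced S))) = d * real (card S)"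
  unfolding primal_set_def primal_iff using subgraph_induced[of S]
  by (auto simp: subgraph_def graph_le_def)

lemma primal_set_fst: "primal J K \<Longrightarrow> primal_set (fst J)"
  using primal_induced unfolding primal_set_def by metis

lemma primal_set_subset: "primal_set S \<Longrightarrow> S \<subseteq> fst K"
  by (simp add: primal_set_iff)

lemma primal_set_finite: "primal_set S \<Longrightarrow> finite S"
  using primal_set_subset finite_vertices_K finite_subset by blast

lemma card_induced_edges_le: "S \<subseteq> fst K \<Longrightarrow> real (card (snd (induced S))) \<le> d * real (card S)"
  using card_edges_le[OF subgraph_induced] by simp

lemma card_induced_edges_supermodular:
  "card (snd (induced A)) + card (snd (induced B))
     \<le> card (snd (induced (A \<union> B))) + card (snd (induced (A \<inter> B)))"
proof -
  let ?X = "snd (induced A)" and ?Y = "snd (induced B)"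
  have "finite ?X" "finite ?Y" using finite_edges_K by (auto simp: induced_def)
  then have "card ?X + card ?Y = card (?X \<union> ?Y) + card (?X \<inter> ?Y)" by (rule card_Un_Int)
  moreover have "card (?X \<union> ?Y) \<le> card (snd (induced (A \<union> B)))"
    using finite_edges_K by (intro card_mono) (auto simp: induced_def)
  moreover have "?X \<inter> ?Y = snd (induced (A \<inter> B))" by (auto simp: induced_def)
  ultimately show ?thesis by simp
qed

text \<open>Supermodularity of the edge count against modularity of the vertex count, with both
  sides bounded by the density \<open>d\<close>, forces equality for union and intersection.\<close>

lemma primal_set_Un_Int_density:
  assumes "primal_set A" "primal_set B"
  shows "real (card (snd (induced (A \<union> B)))) = d * real (card (A \<union> B))"
    and "real (card (snd (induced (A \<inter> B)))) = d * real (card (A \<inter> B))"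
proof -
  have AB: "A \<subseteq> fst K" "B \<subseteq> fst K" using assms by (auto simp: primal_set_iff)
  have "card A + card B = card (A \<union> B) + card (A \<inter> B)"
    using card_Un_Int assms primal_set_finite by blast
  then have "real (card A) + real (card B) = real (card (A \<union> B)) + real (card (A \<inter> B))"
    by (metis of_nat_add)
  moreover have "real (card (snd (induced A))) + real (card (snd (induced B)))
      \<le> real (card (snd (induced (A \<union> B)))) + real (card (snd (induced (A \<inter> B))))"
    using card_induced_edges_supermodular[of A B] by linarith
  moreover have "real (card (snd (induced (A \<union> B)))) \<le> d * real (card (A \<union> B))"
    "real (card (snd (induced (A \<inter> B)))) \<le> d * real (card (A \<inter> B))"
    using AB by (auto intro!: card_induced_edges_le)
  ultimately show "real (card (snd (induced (A \<union> B)))) = d * real (card (A \<union> B))"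
    and "real (card (snd (induced (A \<inter> B)))) = d * real (card (A \<inter> B))"
    using assms unfolding primal_set_iff by (smt (verit, best) distrib_left)+
qed

lemma primal_set_Un: "primal_set A \<Longrightarrow> primal_set B \<Longrightarrow> primal_set (A \<union> B)"
  using primal_set_Un_Int_density(1)[of A B] by (auto simp: primal_set_iff)

lemma primal_set_Int: "primal_set A \<Longrightarrow> primal_set B \<Longrightarrow> A \<inter> B \<noteq> {} \<Longrightarrow> primal_set (A \<inter> B)"
  using primal_set_Un_Int_density(2)[of A B] by (auto simp: primal_set_iff)

definition primal_hull :: "'a \<Rightarrow> 'a set" where
  "primal_hull x = (ARG_MIN card S. primal_set S \<and> x \<in> S)"

lemma primal_hull:
  assumes "x \<in> fst K"
  shows "primal_set (primal_hull x)" "x \<in> primal_hull x"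
proof -
  have "primal_set (fst K)" using primal_set_fst[OF primal_K] .
  then have "primal_set (primal_hull x) \<and> x \<in> primal_hull x"
    unfolding primal_hull_def using assms by (intro arg_min_nat_lemma[THEN conjunct1]) auto
  then show "primal_set (primal_hull x)" "x \<in> primal_hull x" by auto
qed

lemma primal_hull_least:
  assumes "primal_set S" "x \<in> S"
  shows "primal_hull x \<subseteq> S"
proof -
  have x: "x \<in> fst K" using assms primal_set_subset by auto
  then have "primal_set (primal_hull x \<inter> S) \<and> x \<in> primal_hull x \<inter> S"
    using primal_hull[OF x] assms primal_set_Int by blast
  then have "card (primal_hull x) \<le> card (primal_hull x \<inter> S)"
    unfolding primal_hull_def by (rule arg_min_nat_le)
  moreover have "finite (primal_hull x)" using primal_hull(1)[OF x] primal_set_finite by blast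
  ultimately have "primal_hull x \<inter> S = primal_hull x" by (meson card_seteq inf_le1)
  then show ?thesis by blast
qed

lemma primal_hull_not_in_image:
  assumes "primal_set A" "x \<in> fst K" "x \<notin> A"
  shows "primal_hull x \<notin> primal_hull ` A"
proof
  assume "primal_hull x \<in> primal_hull ` A"
  then obtain y where "y \<in> A" "primal_hull x = primal_hull y" by auto
  then have "primal_hull x \<subseteq> A" using primal_hull_least assms(1) by auto
  then show False using primal_hull(2)[OF assms(2)] assms(3) by auto
qed

definition hull_rank :: "'a set \<Rightarrow> nat" where
  "hull_rank A = card (primal_hull ` A)"

lemma hull_rank_strict_mono:
  assumes "primal_set A" "primal_set B" "A \<subset> B"
  shows "hull_rank A < hull_rank B"
proof -
  obtain x where x: "x \<in> B" "x \<notin> A" using assms(3) by blast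
  then have "primal_hull x \<notin> primal_hull ` A"
    using assms primal_set_subset by (intro primal_hull_not_in_image) auto
  then have "primal_hull ` A \<subset> primal_hull ` B" using x assms(3) by blast
  moreover have "finite (primal_hull ` B)" using primal_set_finite assms(2) by auto
  ultimately show ?thesis unfolding hull_rank_def by (simp add: psubset_card_mono)
qed

text \<open>If no primal set lies strictly between \<open>A\<close> and \<open>B\<close>, then \<open>A \<union> primal_hull y = B\<close> for
  every \<open>y \<in> B - A\<close>, so all these vertices share a single hull.\<close>

lemma hull_rank_cover:
  assumes "primal_set A" "primal_set B" "A \<subset> B"
    and between: "\<And>S. primal_set S \<Longrightarrow> A \<subset> S \<Longrightarrow> S \<subset> B \<Longrightarrow> False"
  shows "hull_rank B = Suc (hull_rank A)"
proof -
  have in_hull: "z \<in> primal_hull w" if "z \<in> B - A" "w \<in> B - A" for z w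
  proof -
    have w: "w \<in> fst K" using that assms primal_set_subset by auto
    have "primal_set (A \<union> primal_hull w)" using assms(1) primal_hull[OF w] primal_set_Un by auto
    moreover have "A \<subset> A \<union> primal_hull w" using primal_hull(2)[OF w] that by auto
    moreover have "A \<union> primal_hull w \<subseteq> B" using primal_hull_least[OF assms(2)] that assms(3) by auto
    ultimately have "A \<union> primal_hull w = B" using between by blast
    then show ?thesis using that by auto
  qed
  obtain x where x: "x \<in> B - A" using assms(3) by blast
  have "primal_hull y = primal_hull x" if y: "y \<in> B - A" for y
  proof -
    have "x \<in> fst K" "y \<in> fst K" using x y assms(2) primal_set_subset by auto
    then show ?thesis
      using primal_hull_least[of "primal_hull x" y] primal_hull_least[of "primal_hull y" x]
        primal_hull[of x] primal_hull[of y] in_hull x y by blast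
  qed
  then have "primal_hull ` B = insert (primal_hull x) (primal_hull ` A)"
    using x assms(3) by blast
  moreover have "primal_hull x \<notin> primal_hull ` A"
    using x assms primal_set_subset by (intro primal_hull_not_in_image) auto
  moreover have "finite (primal_hull ` A)" using primal_set_finite assms(1) by auto
  ultimately show ?thesis by (simp add: hull_rank_def)
qed

context
  fixes \<psi> :: "'a \<Rightarrow> 'a" and A A' :: "'a set"
  assumes primal_A: "primal_set A" and primal_A': "primal_set A'"
    and inj: "inj_on \<psi> A" and image: "\<psi> ` A = A'"
    and adjacent: "\<And>a b. a \<in> A \<Longrightarrow> b \<in> A \<Longrightarrow> {a, b} \<in> snd K \<longleftrightarrow> {\<psi> a, \<psi> b} \<in> snd K"
begin

lemma induced_edges_image:
  assumes "S \<subseteq> A"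
  shows "snd (induced (\<psi> ` S)) = (\<lambda>e. \<psi> ` e) ` snd (induced S)"
proof (intro equalityI subsetI)
  fix e assume "e \<in> snd (induced (\<psi> ` S))"
  then have e: "e \<in> snd K" "e \<subseteq> \<psi> ` S" by (auto simp: induced_def)
  then obtain a' b' where "e = {a', b'}" using graph_K by (auto simp: graph_def)
  then obtain a b where "e = {\<psi> a, \<psi> b}" "a \<in> S" "b \<in> S" using e(2) by auto
  with e assms adjacent show "e \<in> (\<lambda>e. \<psi> ` e) ` snd (induced S)"
    by (auto simp: induced_def intro!: image_eqI[where x="{a, b}"])
next
  fix e assume "e \<in> (\<lambda>e. \<psi> ` e) ` snd (induced S)"
  then obtain a b where "e = {\<psi> a, \<psi> b}" "{a, b} \<in> snd K" "a \<in> S" "b \<in> S"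
    using graph_K by (auto simp: graph_def induced_def)
  with assms adjacent show "e \<in> snd (induced (\<psi> ` S))" by (auto simp: induced_def)
qed

lemma primal_set_image_iff: "S \<subseteq> A \<Longrightarrow> primal_set (\<psi> ` S) \<longleftrightarrow> primal_set S"
proof -
  assume S: "S \<subseteq> A"
  have "card (\<psi> ` S) = card S" using inj S by (meson card_image inj_on_subset)
  moreover have "card (snd (induced (\<psi> ` S))) = card (snd (induced S))"
    unfolding induced_edges_image[OF S]
    by (rule card_image, rule inj_on_subset[OF inj_on_image_Pow[OF inj]]) (use S in \<open>auto simp: induced_def\<close>)
  moreover have "\<psi> ` S \<subseteq> fst K" "S \<subseteq> fst K"
    using S image primal_A primal_A' primal_set_subset by auto
  ultimately show ?thesis by (simp add: primal_set_iff)
qed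

lemma primal_hull_image: "x \<in> A \<Longrightarrow> primal_hull (\<psi> x) = \<psi> ` primal_hull x"
proof
  assume x: "x \<in> A"
  have hull_A: "primal_hull x \<subseteq> A" using primal_hull_least[OF primal_A x] .
  have "x \<in> fst K" using x primal_A primal_set_subset by auto
  then show "primal_hull (\<psi> x) \<subseteq> \<psi> ` primal_hull x"
    using primal_set_image_iff[OF hull_A] primal_hull[of x] by (intro primal_hull_least) auto
  define T where "T = {a \<in> A. \<psi> a \<in> primal_hull (\<psi> x)}"
  have "\<psi> ` T = primal_hull (\<psi> x)"
    using primal_hull_least[OF primal_A'] x image by (auto simp: T_def)
  moreover have "\<psi> x \<in> fst K" using x image primal_A' primal_set_subset by auto
  ultimately have "primal_set T" "x \<in> T"
    using primal_set_image_iff[of T] primal_hull[of "\<psi> x"] x by (auto simp: T_def)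
  then have "primal_hull x \<subseteq> T" by (rule primal_hull_least)
  then show "\<psi> ` primal_hull x \<subseteq> primal_hull (\<psi> x)" using \<open>\<psi> ` T = primal_hull (\<psi> x)\<close> by auto
qed

lemma hull_rank_image: "hull_rank A' = hull_rank A"
proof -
  have "primal_hull ` A' = (\<lambda>S. \<psi> ` S) ` primal_hull ` A"
    using primal_hull_image image by (auto simp: image_iff)
  moreover have "inj_on (\<lambda>S. \<psi> ` S) (primal_hull ` A)"
    using primal_hull_least[OF primal_A]
    by (intro inj_on_subset[OF inj_on_image_Pow[OF inj]]) auto
  ultimately show ?thesis by (simp add: hull_rank_def card_image)
qed

end

lemma hull_rank_iso:
  assumes A: "primal A K" and A': "primal A' K" and iso: "iso_map \<chi> A A'"
  shows "hull_rank (fst A') = hull_rank (fst A)"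
proof (rule hull_rank_image)
  show "primal_set (fst A)" "primal_set (fst A')" using A A' primal_set_fst by auto
  show "inj_on \<chi> (fst A)" "\<chi> ` fst A = fst A'" using iso by (auto simp: iso_map_def bij_betw_def)
  fix a b assume ab: "a \<in> fst A" "b \<in> fst A"
  then have "\<chi> a \<in> fst A'" "\<chi> b \<in> fst A'" using iso by (auto simp: iso_map_def dest: bij_betwE)
  have "{a, b} \<in> snd K \<longleftrightarrow> {a, b} \<in> snd A"
    using ab primal_induced[OF A] by (metis (no_types, lifting) empty_subsetI induced_def
        insert_subset mem_Collect_eq snd_conv)
  also have "\<dots> \<longleftrightarrow> {\<chi> a, \<chi> b} \<in> snd A'" using iso ab by (simp add: iso_map_def)
  also have "\<dots> \<longleftrightarrow> {\<chi> a, \<chi> b} \<in> snd K"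
    using \<open>\<chi> a \<in> fst A'\<close> \<open>\<chi> b \<in> fst A'\<close> primal_induced[OF A']
    by (metis (no_types, lifting) empty_subsetI induced_def insert_subset mem_Collect_eq snd_conv)
  finally show "{a, b} \<in> snd K \<longleftrightarrow> {\<chi> a, \<chi> b} \<in> snd K" .
qed

text \<open>This is where the rank pays off: along a cover the rank grows by one, yet an isomorphic
  copy of the bottom has the same rank as the bottom itself.\<close>

lemma no_primal_between_iso_copy_and_cover:
  assumes cover: "primal_cover K G0 G1"
    and G0': "primal G0' K" "iso_map \<chi> G0 G0'"
    and J: "primal J K" "fst G0' \<subset> fst J" "fst J \<subset> fst G1"
  shows False
proof -
  have G0: "primal G0 K" and G1: "primal G1 K" and le: "graph_le G0 G1" and ne: "G0 \<noteq> G1"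
    using cover by (auto simp: primal_cover_def)
  have between: False if S: "primal_set S" "fst G0 \<subset> S" "S \<subset> fst G1" for S
  proof -
    have "graph_le G0 (induced S)" "graph_le (induced S) G1"
      using primal_induced[OF G0] primal_induced[OF G1] graph_le_induced S(2,3) by (metis less_imp_le)+
    moreover have "induced S \<noteq> G0" "induced S \<noteq> G1" using S(2,3) by auto
    ultimately show False using cover S(1) unfolding primal_cover_def primal_set_def by blast
  qed
  have "fst G0 \<subset> fst G1"
    using le ne primal_eq_if_fst_eq[OF G0 G1] by (auto simp: graph_le_def)
  then have "hull_rank (fst G1) = Suc (hull_rank (fst G0))"
    using between primal_set_fst[OF G0] primal_set_fst[OF G1] by (intro hull_rank_cover) auto
  moreover have "hull_rank (fst G0') = hull_rank (fst G0)" by (rule hull_rank_iso[OF G0 G0'])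
  moreover have "hull_rank (fst G0') < hull_rank (fst J)" "hull_rank (fst J) < hull_rank (fst G1)"
    using hull_rank_strict_mono primal_set_fst[OF G0'(1)] primal_set_fst[OF J(1)]
      primal_set_fst[OF G1] J(2,3) by blast+
  ultimately show False by linarith
qed

section \<open>Consequences of local sparsity\<close>

definition locally_sparse :: "nat \<Rightarrow> nat set set \<Rightarrow> bool" where
  "locally_sparse n E \<longleftrightarrow> (\<forall>V. V \<subseteq> {1..n} \<longrightarrow> card V \<le> 2 * card (fst K) \<longrightarrow>
      real (card {e \<in> E. e \<subseteq> V}) \<le> d * real (card V))"

text \<open>Two copies of a primal graph span at most \<open>2 v_K\<close> vertices, so local sparsity bounds
  their union by density \<open>d\<close>; inclusion-exclusion turns this into a lower bound for the
  intersection.\<close>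

lemma dense_graph_inter_copies:
  assumes sparse: "locally_sparse n E" and G: "primal G K"
    and H1: "H1 \<in> copies G n E" and H2: "H2 \<in> copies G n E"
  shows "d * real (card (fst (graph_inter H1 H2))) \<le> real (card (snd (graph_inter H1 H2)))"
proof -
  have "graph G" using G by (rule primal_graph)
  note cards = card_copies[OF H1 this] card_copies[OF H2 this]
  have "graph H1" "graph H2" using H1 H2 by (auto intro: copies_graph)
  note finite = graph_finite_vertices[OF this(1)] graph_finite_vertices[OF this(2)]
    graph_finite_edges[OF this(1)] graph_finite_edges[OF this(2)]
  define V where "V = fst H1 \<union> fst H2"
  have card_V: "card (fst H1) + card (fst H2) = card V + card (fst H1 \<inter> fst H2)"
    using card_Un_Int[OF finite(1,2)] by (simp add: V_def)
  have card_E: "card (snd H1) + card (snd H2) = card (snd H1 \<union> snd H2) + card (snd H1 \<inter> snd H2)"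
    using card_Un_Int[OF finite(3,4)] .
  have "V \<subseteq> {1..n}" using copies_vertices[OF H1] copies_vertices[OF H2] by (auto simp: V_def)
  moreover have "card V \<le> 2 * card (fst K)" using card_V cards primal_card_vertices_le[OF G] by linarith
  ultimately have "real (card {e \<in> E. e \<subseteq> V}) \<le> d * real (card V)"
    by (rule sparse[unfolded locally_sparse_def, rule_format])
  moreover have "card (snd H1 \<union> snd H2) \<le> card {e \<in> E. e \<subseteq> V}"
  proof (rule card_mono)
    have "finite V" using finite(1,2) by (simp add: V_def)
    then show "finite {e \<in> E. e \<subseteq> V}" by (rule finite_subset[rotated, OF finite_Pow_iff[THEN iffD2]]) auto
    show "snd H1 \<union> snd H2 \<subseteq> {e \<in> E. e \<subseteq> V}"
      using copies_edges[OF H1] copies_edges[OF H2] graph_edge_subset[OF \<open>graph H1\<close>]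
        graph_edge_subset[OF \<open>graph H2\<close>] unfolding V_def by blast
  qed
  moreover have "real (card (snd G)) = d * real (card (fst G))" using G primal_iff by blast
  ultimately show ?thesis
    using card_V card_E cards unfolding graph_inter_def
    by simp (smt (verit) distrib_left of_nat_add of_nat_mono)
qed

lemma primal_pullback:
  assumes G: "primal G K" and inj: "inj_on \<phi> (fst G)"
    and I: "graph I" "graph_le I (graph_image \<phi> G)" "fst I \<noteq> {}"
    and dense: "d * real (card (fst I)) \<le> real (card (snd I))"
  defines "\<psi> \<equiv> inv_into (fst G) \<phi>"
  shows "primal (graph_image \<psi> I) K" "iso_map \<psi> I (graph_image \<psi> I)"
    "graph_image \<phi> (graph_image \<psi> I) = I" "graph_le (graph_image \<psi> I) G"
proof -
  have "inj_on \<psi> (\<phi> ` fst G)" unfolding \<psi>_def by (rule inj_on_inv_into) simp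
  then have inj_\<psi>: "inj_on \<psi> (fst I)" using I(2) by (auto simp: graph_le_def intro: inj_on_subset)
  have "graph_le (graph_image \<psi> I) (graph_image \<psi> (graph_image \<phi> G))"
    using I(2) by (rule graph_le_graph_image)
  moreover have "graph_image \<psi> (graph_image \<phi> G) = G"
    unfolding \<psi>_def using primal_graph[OF G] inj by (intro graph_image_inverse) auto
  ultimately show le: "graph_le (graph_image \<psi> I) G" by simp
  have "subgraph (graph_image \<psi> I) K"
    using le G graph_graph_image[OF I(1) inj_\<psi>] primal_graph_le_K[OF G]
    by (auto simp: subgraph_def intro: graph_le_trans)
  then show "primal (graph_image \<psi> I) K"
    by (rule primalI) (use I(3) dense card_vertices_graph_image[OF inj_\<psi>]
        card_edges_graph_image[OF I(1) inj_\<psi>] in auto)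
  show "iso_map \<psi> I (graph_image \<psi> I)" by (rule iso_map_graph_image[OF I(1) inj_\<psi>])
  show "graph_image \<phi> (graph_image \<psi> I) = I"
  proof (rule graph_image_inverse[OF I(1)])
    fix x assume "x \<in> fst I"
    then have "x \<in> \<phi> ` fst G" using I(2) by (auto simp: graph_le_def)
    then show "\<phi> (\<psi> x) = x" unfolding \<psi>_def by (rule f_inv_into_f)
  qed
qed

lemma copies_inter_pullback:
  assumes sparse: "locally_sparse n E" and G: "primal G K" and inj: "inj_on \<phi> (fst G)"
    and H1: "graph_image \<phi> G \<in> copies G n E" and H2: "H2 \<in> copies G n E"
    and meet: "fst (graph_image \<phi> G) \<inter> fst H2 \<noteq> {}"
  defines "\<psi> \<equiv> inv_into (fst G) \<phi>" and "I \<equiv> graph_inter (graph_image \<phi> G) H2"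
  shows "primal (graph_image \<psi> I) K" "iso_map \<psi> I (graph_image \<psi> I)"
    "graph_image \<phi> (graph_image \<psi> I) = I" "graph_le (graph_image \<psi> I) G"
proof -
  have "graph I" unfolding I_def using H1 H2 by (intro graph_graph_inter copies_graph)
  moreover have "graph_le I (graph_image \<phi> G)" unfolding I_def by (rule graph_le_inter1)
  moreover have "fst I \<noteq> {}" using meet by (simp add: I_def graph_inter_def)
  moreover have "d * real (card (fst I)) \<le> real (card (snd I))"
    unfolding I_def by (rule dense_graph_inter_copies[OF sparse G H1 H2])
  ultimately show "primal (graph_image \<psi> I) K" "iso_map \<psi> I (graph_image \<psi> I)"
    "graph_image \<phi> (graph_image \<psi> I) = I" "graph_le (graph_image \<psi> I) G"
    unfolding \<psi>_def by (rule primal_pullback[OF G inj])+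
qed

lemma copies_inter_pullback_ne:
  assumes sparse: "locally_sparse n E" and G: "primal G K" and inj: "inj_on \<phi> (fst G)"
    and H1: "graph_image \<phi> G \<in> copies G n E" and H2: "H2 \<in> copies G n E"
    and meet: "fst (graph_image \<phi> G) \<inter> fst H2 \<noteq> {}" and ne: "graph_image \<phi> G \<noteq> H2"
  shows "graph_image (inv_into (fst G) \<phi>) (graph_inter (graph_image \<phi> G) H2) \<noteq> G"
proof
  assume "graph_image (inv_into (fst G) \<phi>) (graph_inter (graph_image \<phi> G) H2) = G"
  then have "graph_inter (graph_image \<phi> G) H2 = graph_image \<phi> G"
    using copies_inter_pullback(3)[OF sparse G inj H1 H2 meet] by simp
  then have "graph_le (graph_image \<phi> G) H2" using graph_le_inter2 by metis
  then show False using copies_eq_if_graph_le[OF H1 H2 primal_graph[OF G]] ne by blast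
qed

lemma prop_i_if_locally_sparse:
  assumes sparse: "locally_sparse n E"
  shows "prop_i K n E"
  unfolding prop_i_def
proof (intro allI impI ballI)
  fix G H1 H2 assume G: "primal G K" and H1: "H1 \<in> copies G n E" and H2: "H2 \<in> copies G n E"
  obtain \<phi> where inj: "inj_on \<phi> (fst G)" and H1_eq: "H1 = graph_image \<phi> G"
    using copiesE[OF H1 primal_graph[OF G]] by blast
  show "fst H1 \<inter> fst H2 = {} \<or> (\<exists>J. primal J K \<and> isomorphic (graph_inter H1 H2) J)"
    using copies_inter_pullback(1,2)[OF sparse G inj H1[unfolded H1_eq] H2]
    unfolding H1_eq isomorphic_def by blast
qed

lemma prop_iv_if_locally_sparse:
  assumes sparse: "locally_sparse n E"
  shows "prop_iv K n E"
  unfolding prop_iv_def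
proof (intro ballI allI impI)
  fix v Gv x
  assume "primal Gv K \<and> v \<in> fst Gv \<and> \<not> (\<exists>J. primal J K \<and> v \<in> fst J \<and> graph_le J Gv \<and> J \<noteq> Gv)"
  then have G: "primal Gv K" and v: "v \<in> fst Gv"
    and minimal: "\<And>J. primal J K \<Longrightarrow> v \<in> fst J \<Longrightarrow> graph_le J Gv \<Longrightarrow> J = Gv" by auto
  have graph_Gv: "graph Gv" using G by (rule primal_graph)
  let ?S = "{H \<in> copies Gv n E. \<exists>\<phi>. iso_map \<phi> Gv H \<and> \<phi> v = x}"
  have "H1 = H2" if S: "H1 \<in> ?S" "H2 \<in> ?S" for H1 H2
  proof -
    obtain \<phi>1 \<phi>2 where H: "H1 \<in> copies Gv n E" "H2 \<in> copies Gv n E"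
      and \<phi>: "iso_map \<phi>1 Gv H1" "\<phi>1 v = x" "iso_map \<phi>2 Gv H2" "\<phi>2 v = x"
      using S by blast
    have H_eq: "H1 = graph_image \<phi>1 Gv" "H2 = graph_image \<phi>2 Gv"
      using graph_image_if_iso_map[OF graph_Gv] copies_graph H \<phi> by blast+
    have inj: "inj_on \<phi>1 (fst Gv)" using \<phi>(1) by (rule iso_map_inj_on)
    have x: "x \<in> fst H1 \<inter> fst H2" using H_eq \<phi>(2,4) v by (metis IntI fst_graph_image imageI)
    then have meet: "fst (graph_image \<phi>1 Gv) \<inter> fst H2 \<noteq> {}" using H_eq(1) by blast
    define \<psi> where "\<psi> = inv_into (fst Gv) \<phi>1"
    note J = copies_inter_pullback[OF sparse G inj H(1)[unfolded H_eq(1)] H(2) meet,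
        folded \<psi>_def H_eq(1)]
    have "\<psi> x = v" unfolding \<psi>_def using \<phi>(2) inj v by (metis inv_into_f_f)
    then have "v \<in> fst (graph_image \<psi> (graph_inter H1 H2))" using x by (force simp: graph_inter_def)
    then have "graph_image \<psi> (graph_inter H1 H2) = Gv" using J x minimal by blast
    then show "H1 = H2"
      using copies_inter_pullback_ne[OF sparse G inj H(1)[unfolded H_eq(1)] H(2) meet, folded \<psi>_def H_eq(1)]
      by blast
  qed
  moreover have "finite ?S" using finite_copies[of Gv n E] by simp
  ultimately show "card ?S \<le> 1" by (simp add: card_le_Suc0_iff_eq)
qed

lemma prop_ii_if_locally_sparse:
  assumes sparse: "locally_sparse n E"
  shows "prop_ii K n E"
  unfolding prop_ii_def
proof (intro allI impI ballI)
  fix G0 G1 H0 H1 H2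
  assume cover: "primal_cover K G0 G1" and H0: "H0 \<in> copies G0 n E"
    and H1: "H1 \<in> copies G1 n E" and H2: "H2 \<in> copies G1 n E"
    and H: "graph_le H0 H1 \<and> graph_le H0 H2 \<and> H1 \<noteq> H2"
  have G0: "primal G0 K" and G1: "primal G1 K" using cover by (auto simp: primal_cover_def)
  obtain \<phi>0 where \<phi>0: "iso_map \<phi>0 G0 H0" using copiesE[OF H0 primal_graph[OF G0]] by blast
  obtain \<phi>1 where inj1: "inj_on \<phi>1 (fst G1)" and H1_eq: "H1 = graph_image \<phi>1 G1"
    using copiesE[OF H1 primal_graph[OF G1]] by blast
  define \<psi> where "\<psi> = inv_into (fst G1) \<phi>1"
  let ?I = "graph_inter H1 H2"
  show "(fst H1 - fst H0) \<inter> (fst H2 - fst H0) = {}"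
  proof (rule ccontr)
    assume "(fst H1 - fst H0) \<inter> (fst H2 - fst H0) \<noteq> {}"
    then obtain y where y: "y \<in> fst ?I" "y \<notin> fst H0" by (auto simp: graph_inter_def)
    then have meet: "fst H1 \<inter> fst H2 \<noteq> {}" by (auto simp: graph_inter_def)
    note J = copies_inter_pullback[OF sparse G1 inj1 H1[unfolded H1_eq] H2 meet[unfolded H1_eq],
        folded \<psi>_def H1_eq]
    have card_H0: "card (fst H0) = card (fst G0)" "card (snd H0) = card (snd G0)"
      using card_copies[OF H0 primal_graph[OF G0]] by auto
    have "graph_le H0 (graph_image \<phi>1 G1)" using H H1_eq by simp
    moreover have "fst H0 \<noteq> {}" using \<phi>0 G0 by (auto simp: iso_map_def bij_betw_def primal_def)
    moreover have "d * real (card (fst H0)) \<le> real (card (snd H0))"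
      using card_H0 G0 by (simp add: primal_iff)
    ultimately have G0': "primal (graph_image \<psi> H0) K" "iso_map \<psi> H0 (graph_image \<psi> H0)"
      using primal_pullback(1,2)[OF G1 inj1 copies_graph[OF H0]] unfolding \<psi>_def by blast+
    have "inj_on \<psi> (fst H1)" unfolding \<psi>_def H1_eq by (simp add: inj_on_inv_into)
    moreover have "fst H0 \<subseteq> fst ?I" "fst ?I \<subseteq> fst H1"
      using H by (auto simp: graph_le_def graph_inter_def)
    ultimately have "\<psi> y \<notin> \<psi> ` fst H0" using y by (auto dest: inj_onD)
    then have "fst (graph_image \<psi> H0) \<subset> fst (graph_image \<psi> ?I)"
      using \<open>fst H0 \<subseteq> fst ?I\<close> y(1) by auto
    moreover have "fst (graph_image \<psi> ?I) \<subset> fst G1"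
    proof
      show "fst (graph_image \<psi> ?I) \<subseteq> fst G1" using J(4) by (auto simp: graph_le_def)
      show "fst (graph_image \<psi> ?I) \<noteq> fst G1"
        using copies_inter_pullback_ne[OF sparse G1 inj1 H1[unfolded H1_eq] H2 meet[unfolded H1_eq],
            folded \<psi>_def H1_eq] primal_eq_if_fst_eq[OF J(1) G1] H by blast
    qed
    moreover have "iso_map (\<psi> \<circ> \<phi>0) G0 (graph_image \<psi> H0)" by (rule iso_map_comp[OF \<phi>0 G0'(2)])
    ultimately show False using no_primal_between_iso_copy_and_cover[OF cover G0'(1)] J(1) by blast
  qed
qed

end

section \<open>From (iii) and (iv) to (v)\<close>

lemma real_card_UN_le:
  assumes "finite I" "\<And>i. i \<in> I \<Longrightarrow> real (card (A i)) \<le> b"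
  shows "real (card (\<Union>i\<in>I. A i)) \<le> real (card I) * b"
proof -
  have "real (card (\<Union>i\<in>I. A i)) \<le> (\<Sum>i\<in>I. real (card (A i)))"
    using card_UN_le[OF assms(1), of A] by (simp only: of_nat_sum[symmetric] of_nat_le_iff)
  also have "\<dots> \<le> real (card I) * b" using assms(2) by (rule sum_bounded_above)
  finally show ?thesis .
qed

context balanced_graph
begin

lemma primal_cover_exists:
  assumes A: "primal A K" "A \<noteq> K"
  shows "\<exists>F. primal_cover K A F"
proof -
  define X where "X = {F. primal F K \<and> graph_le A F \<and> F \<noteq> A}"
  have "K \<in> X" using A primal_K primal_graph_le_K by (auto simp: X_def)
  define F0 where "F0 = (ARG_MIN (\<lambda>F. card (fst F)) F. F \<in> X)"
  have F0: "F0 \<in> X" unfolding F0_def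
    by (rule arg_min_nat_lemma[where P="\<lambda>F. F \<in> X", OF \<open>K \<in> X\<close>, THEN conjunct1])
  have F0_min: "card (fst F0) \<le> card (fst F)" if "F \<in> X" for F
    unfolding F0_def by (rule arg_min_nat_le[where P="\<lambda>F. F \<in> X", OF that])
  have "primal_cover K A F0" unfolding primal_cover_def
  proof (intro conjI notI)
    assume "\<exists>F. primal F K \<and> graph_le A F \<and> F \<noteq> A \<and> graph_le F F0 \<and> F \<noteq> F0"
    then obtain F where F: "F \<in> X" "graph_le F F0" "F \<noteq> F0" by (auto simp: X_def)
    then have "card (fst F) < card (fst F0)" using primal_card_less F0 by (auto simp: X_def)
    then show False using F0_min[OF F(1)] by simp
  qed (use A F0 X_def in auto)
  then show ?thesis ..
qed

definition cover :: "'a graph \<Rightarrow> 'a graph" where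
  "cover A = (SOME F. primal_cover K A F)"

lemma primal_cover_cover: "primal A K \<Longrightarrow> A \<noteq> K \<Longrightarrow> primal_cover K A (cover A)"
  unfolding cover_def using primal_cover_exists by (rule someI_ex)

lemma primal_cover_card_less: "primal_cover K A F \<Longrightarrow> card (fst A) < card (fst F)"
  unfolding primal_cover_def using primal_card_less by blast

lemma copy_in_copy_of_K:
  assumes HA: "HA \<in> copies A n E" and A: "primal A K" and H: "H \<in> copies K n E"
    and le: "graph_le HA H"
  obtains \<phi> A' where "inj_on \<phi> (fst K)" "H = graph_image \<phi> K" "primal A' K"
    "HA = graph_image \<phi> A'" "card (fst A') = card (fst A)" "HA \<in> copies A' n E"
proof -
  obtain \<phi> where inj: "inj_on \<phi> (fst K)" and H_eq: "H = graph_image \<phi> K"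
    using copiesE[OF H graph_K] by blast
  have card_HA: "card (fst HA) = card (fst A)" "card (snd HA) = card (snd A)"
    using card_copies[OF HA primal_graph[OF A]] by auto
  have "fst A \<noteq> {}" using A by (simp add: primal_def)
  then have ne: "fst HA \<noteq> {}"
    using card_HA(1) graph_finite_vertices[OF primal_graph[OF A]] by (metis card.empty card_0_eq)
  have dense: "d * real (card (fst HA)) \<le> real (card (snd HA))"
    using card_HA A by (simp add: primal_iff)
  note A' = primal_pullback[OF primal_K inj copies_graph[OF HA] le[unfolded H_eq] ne dense]
  let ?A' = "graph_image (inv_into (fst K) \<phi>) HA"
  have "card (fst ?A') = card (fst A)"
    using A'(2) card_HA by (auto simp: iso_map_def bij_betw_def card_image)
  moreover have "inj_on \<phi> (fst ?A')"
    using inj A'(4) by (auto simp: graph_le_def intro: inj_on_subset)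
  then have "iso_map \<phi> ?A' HA"
    using iso_map_graph_image[OF primal_graph[OF A'(1)]] A'(3) by metis
  then have "HA \<in> copies ?A' n E" using HA by (auto simp: copies_def isomorphic_def)
  ultimately show ?thesis using that inj H_eq A'(1,3) by metis
qed

lemma copies_K_above_subset:
  assumes A: "primal A K" "A \<noteq> K" and HA: "HA \<in> copies A n E"
  shows "{H \<in> copies K n E. graph_le HA H} \<subseteq>
    (\<Union>A'\<in>{A'. primal A' K \<and> card (fst A') = card (fst A) \<and> HA \<in> copies A' n E}.
      \<Union>H'\<in>{H' \<in> copies (cover A') n E. graph_le HA H'}. {H \<in> copies K n E. graph_le H' H})"
proof
  fix H assume "H \<in> {H \<in> copies K n E. graph_le HA H}"
  then have H: "H \<in> copies K n E" "graph_le HA H" by auto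
  obtain \<phi> A' where A': "inj_on \<phi> (fst K)" "H = graph_image \<phi> K" "primal A' K"
    "HA = graph_image \<phi> A'" "card (fst A') = card (fst A)" "HA \<in> copies A' n E"
    using copy_in_copy_of_K[OF HA A(1) H] by blast
  have "A' \<noteq> K" using A' primal_card_less[OF A(1) primal_K] A primal_graph_le_K by auto
  then have cover: "primal_cover K A' (cover A')" using primal_cover_cover A'(3) by blast
  then have cover_K: "graph_le (cover A') K" "graph (cover A')"
    using primal_graph_le_K primal_graph by (auto simp: primal_cover_def)
  have "graph_image \<phi> (cover A') \<in> copies (cover A') n E"
    using graph_image_subgraph_in_copies[OF A'(1) _ cover_K] H A'(2) by simp
  moreover have "graph_le HA (graph_image \<phi> (cover A'))"
    using cover A'(4) graph_le_graph_image[of A' "cover A'" \<phi>] by (simp add: primal_cover_def)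
  moreover have "graph_le (graph_image \<phi> (cover A')) H"
    using A'(2) graph_le_graph_image[OF cover_K(1)] by simp
  ultimately show "H \<in> (\<Union>A'\<in>{A'. primal A' K \<and> card (fst A') = card (fst A) \<and> HA \<in> copies A' n E}.
      \<Union>H'\<in>{H' \<in> copies (cover A') n E. graph_le HA H'}. {H \<in> copies K n E. graph_le H' H})"
    using A' H by blast
qed

lemma card_copies_K_above_cover_le:
  assumes iii: "prop_iii K B lam n E" and cover: "primal_cover K A F" and HA: "HA \<in> copies A n E"
    and b: "b \<ge> 0" "\<And>H'. H' \<in> copies F n E \<Longrightarrow> real (card {H \<in> copies K n E. graph_le H' H}) \<le> b"
  shows "real (card (\<Union>H'\<in>{H' \<in> copies F n E. graph_le HA H'}. {H \<in> copies K n E. graph_le H' H}))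
    \<le> B * lam ^ (card (fst F) - card (fst A)) * b"
proof -
  have "finite {H' \<in> copies F n E. graph_le HA H'}" using finite_copies[of F n E] by simp
  then have "real (card (\<Union>H'\<in>{H' \<in> copies F n E. graph_le HA H'}. {H \<in> copies K n E. graph_le H' H}))
      \<le> real (card {H' \<in> copies F n E. graph_le HA H'}) * b"
    using b(2) by (rule real_card_UN_le) simp
  also have "\<dots> \<le> B * lam ^ (card (fst F) - card (fst A)) * b"
    using iii[unfolded prop_iii_def, rule_format, OF cover HA] b(1) by (rule mult_right_mono)
  finally show ?thesis .
qed

text \<open>Induction along covers: going up from \<open>A\<close> to a cover costs a factor \<open>B \<lambda>^m\<close> by (iii),
  summed over the at most \<open>#primal\<close> graphs \<open>A'\<close> of which \<open>H\<^sub>A\<close> is a copy.\<close>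

lemma card_copies_K_above_le:
  assumes iii: "prop_iii K B lam n E" and B: "B \<ge> 1" and lam: "lam \<ge> 0"
  defines "Q \<equiv> real (card {J. primal J K}) * B"
  shows "primal A K \<Longrightarrow> HA \<in> copies A n E \<Longrightarrow>
    real (card {H \<in> copies K n E. graph_le HA H})
      \<le> Q ^ (card (fst K) - card (fst A)) * lam ^ (card (fst K) - card (fst A))"
proof (induction "card (fst K) - card (fst A)" arbitrary: A HA rule: less_induct)
  case less
  note A = less.prems(1) and HA = less.prems(2)
  have Q: "Q \<ge> 1" unfolding Q_def using B by (rule card_primal_mult_ge_1)
  show ?case
  proof (cases "A = K")
    case True
    have "{H \<in> copies K n E. graph_le HA H} \<subseteq> {HA}"
      using copies_eq_if_graph_le[OF HA[unfolded True] _ graph_K] by blast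
    then have "card {H \<in> copies K n E. graph_le HA H} \<le> 1"
      using card_mono[of "{HA}"] by fastforce
    then show ?thesis using True by simp
  next
    case False
    define f where "f = card (fst K) - card (fst A)"
    have f: "f > 0" using primal_card_less[OF A primal_K primal_graph_le_K[OF A] False] by (simp add: f_def)
    define X where "X = {A'. primal A' K \<and> card (fst A') = card (fst A) \<and> HA \<in> copies A' n E}"
    define U where "U = (\<lambda>A'. \<Union>H'\<in>{H' \<in> copies (cover A') n E. graph_le HA H'}.
      {H \<in> copies K n E. graph_le H' H})"
    have step: "real (card (U A')) \<le> B * Q ^ (f - 1) * lam ^ f" if "A' \<in> X" for A'
    proof -
      have A': "primal A' K" "card (fst A') = card (fst A)" "HA \<in> copies A' n E"
        using that by (auto simp: X_def)
      then have "A' \<noteq> K" using primal_card_less[OF A primal_K primal_graph_le_K[OF A] False] by auto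
      then have cover: "primal_cover K A' (cover A')" using A'(1) by (rule primal_cover_cover[rotated])
      then have "primal (cover A') K" by (simp add: primal_cover_def)
      define f' where "f' = card (fst K) - card (fst (cover A'))"
      define m where "m = card (fst (cover A')) - card (fst A')"
      have fm: "f' + m = f" "f' < f"
        using primal_cover_card_less[OF cover] primal_card_vertices_le[OF \<open>primal (cover A') K\<close>] A'(2)
        by (auto simp: f'_def m_def f_def)
      have "real (card (U A')) \<le> B * lam ^ m * (Q ^ f' * lam ^ f')"
        unfolding U_def m_def using Q lam fm less.hyps[OF _ \<open>primal (cover A') K\<close>]
        by (intro card_copies_K_above_cover_le[OF iii cover A'(3)]) (auto simp: f'_def f_def)
      also have "\<dots> = B * Q ^ f' * lam ^ f" using fm(1) by (simp add: power_add[symmetric] algebra_simps)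
      also have "\<dots> \<le> B * Q ^ (f - 1) * lam ^ f"
        using Q B lam fm(2) by (intro mult_right_mono mult_left_mono power_increasing) auto
      finally show ?thesis .
    qed
    have "finite (\<Union>A'\<in>X. U A')"
      by (rule finite_subset[OF _ finite_copies[of K n E]]) (auto simp: U_def)
    then have "card {H \<in> copies K n E. graph_le HA H} \<le> card (\<Union>A'\<in>X. U A')"
      unfolding X_def U_def using copies_K_above_subset[OF A False HA] by (rule card_mono)
    then have "real (card {H \<in> copies K n E. graph_le HA H}) \<le> real (card (\<Union>A'\<in>X. U A'))"
      by (rule of_nat_mono)
    also have "\<dots> \<le> real (card X) * (B * Q ^ (f - 1) * lam ^ f)"
      using finite_primal step by (intro real_card_UN_le) (auto simp: X_def)
    also have "\<dots> \<le> real (card {J. primal J K}) * (B * Q ^ (f - 1) * lam ^ f)"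
      using finite_primal B Q lam by (intro mult_right_mono of_nat_mono card_mono) (auto simp: X_def)
    also have "\<dots> = Q ^ f * lam ^ f"
      using f unfolding Q_def by (cases f) (auto simp: algebra_simps)
    finally show ?thesis by (simp add: f_def)
  qed
qed

definition least_primal_at :: "'a \<Rightarrow> 'a graph" where
  "least_primal_at v = (ARG_MIN (\<lambda>J. card (fst J)) J. primal J K \<and> v \<in> fst J)"

lemma least_primal_at:
  assumes "v \<in> fst K"
  shows "primal (least_primal_at v) K" "v \<in> fst (least_primal_at v)"
    "\<not> (\<exists>J. primal J K \<and> v \<in> fst J \<and> graph_le J (least_primal_at v) \<and> J \<noteq> least_primal_at v)"
proof -
  have "primal (least_primal_at v) K \<and> v \<in> fst (least_primal_at v)"
    unfolding least_primal_at_def using primal_K assms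
    by (intro arg_min_nat_lemma[where P="\<lambda>J. primal J K \<and> v \<in> fst J", THEN conjunct1]) auto
  then show P: "primal (least_primal_at v) K" "v \<in> fst (least_primal_at v)" by auto
  show "\<not> (\<exists>J. primal J K \<and> v \<in> fst J \<and> graph_le J (least_primal_at v) \<and> J \<noteq> least_primal_at v)"
  proof
    assume "\<exists>J. primal J K \<and> v \<in> fst J \<and> graph_le J (least_primal_at v) \<and> J \<noteq> least_primal_at v"
    then obtain J where J: "primal J K" "v \<in> fst J" "graph_le J (least_primal_at v)" "J \<noteq> least_primal_at v"
      by blast
    have "card (fst (least_primal_at v)) \<le> card (fst J)" unfolding least_primal_at_def
      by (rule arg_min_nat_le[where P="\<lambda>J. primal J K \<and> v \<in> fst J"]) (use J in simp)
    moreover have "card (fst J) < card (fst (least_primal_at v))" using primal_card_less[OF J(1) P(1) J(3,4)] .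
    ultimately show False by simp
  qed
qed

definition extensions_at :: "'a \<Rightarrow> nat \<Rightarrow> nat \<Rightarrow> nat set set \<Rightarrow> nat graph set" where
  "extensions_at v x n E = {H \<in> copies (least_primal_at v) n E.
     \<exists>\<phi>. iso_map \<phi> (least_primal_at v) H \<and> \<phi> v = x}"

lemma copies_K_through_subset:
  "{H \<in> copies K n E. x \<in> fst H}
    \<subseteq> (\<Union>v\<in>fst K. \<Union>H'\<in>extensions_at v x n E. {H \<in> copies K n E. graph_le H' H})"
proof
  fix H assume "H \<in> {H \<in> copies K n E. x \<in> fst H}"
  then have H: "H \<in> copies K n E" "x \<in> fst H" by auto
  obtain \<phi> where inj: "inj_on \<phi> (fst K)" and H_eq: "H = graph_image \<phi> K"
    using copiesE[OF H(1) graph_K] by blast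
  obtain v where v: "v \<in> fst K" "\<phi> v = x" using H(2) H_eq by auto
  note G = least_primal_at[OF v(1)]
  have G_le: "graph_le (least_primal_at v) K" "graph (least_primal_at v)"
    using primal_graph_le_K[OF G(1)] primal_graph[OF G(1)] .
  have "inj_on \<phi> (fst (least_primal_at v))"
    using inj G_le(1) by (auto simp: graph_le_def intro: inj_on_subset)
  then have "graph_image \<phi> (least_primal_at v) \<in> extensions_at v x n E"
    using graph_image_subgraph_in_copies[OF inj _ G_le] H(1) H_eq iso_map_graph_image[OF G_le(2)] v(2)
    by (auto simp: extensions_at_def)
  moreover have "graph_le (graph_image \<phi> (least_primal_at v)) H"
    using H_eq graph_le_graph_image[OF G_le(1)] by simp
  ultimately show "H \<in> (\<Union>v\<in>fst K. \<Union>H'\<in>extensions_at v x n E. {H \<in> copies K n E. graph_le H' H})"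
    using v(1) H(1) by blast
qed

lemma prop_v_if_prop_iii_iv:
  assumes iii: "prop_iii K B lam n E" and iv: "prop_iv K n E" and B: "B \<ge> 1" and lam: "lam \<ge> 1"
  defines "Q \<equiv> real (card {J. primal J K}) * B"
  shows "prop_v K (real (card (fst K)) * Q ^ card (fst K)) lam n E"
  unfolding prop_v_def
proof (intro allI impI ballI)
  fix Gmin x
  assume Gmin: "primal Gmin K \<and> (\<forall>J. primal J K \<longrightarrow> card (fst Gmin) \<le> card (fst J))"
    and x: "x \<in> {1..n}"
  have Q: "Q \<ge> 1" unfolding Q_def using B by (rule card_primal_mult_ge_1)
  define U where "U = (\<lambda>v. \<Union>H'\<in>extensions_at v x n E. {H \<in> copies K n E. graph_le H' H})"
  define bound where "bound = Q ^ card (fst K) * lam ^ (card (fst K) - card (fst Gmin))"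
  have "finite (\<Union>v\<in>fst K. U v)"
    by (rule finite_subset[OF _ finite_copies[of K n E]]) (auto simp: U_def)
  then have "real (card {H \<in> copies K n E. x \<in> fst H}) \<le> real (card (\<Union>v\<in>fst K. U v))"
    unfolding U_def using copies_K_through_subset by (intro of_nat_mono card_mono)
  also have "\<dots> \<le> real (card (fst K)) * bound"
  proof (rule real_card_UN_le[OF finite_vertices_K])
    fix v assume v: "v \<in> fst K"
    note G = least_primal_at[OF v]
    have "card (extensions_at v x n E) \<le> 1" using iv v G x unfolding prop_iv_def extensions_at_def by blast
    moreover have "finite (extensions_at v x n E)"
      using finite_subset[OF _ finite_copies[of "least_primal_at v" n E]] by (auto simp: extensions_at_def)
    moreover have "real (card {H \<in> copies K n E. graph_le H' H}) \<le> bound"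
      if "H' \<in> extensions_at v x n E" for H'
    proof -
      have "real (card {H \<in> copies K n E. graph_le H' H})
          \<le> Q ^ (card (fst K) - card (fst (least_primal_at v))) * lam ^ (card (fst K) - card (fst (least_primal_at v)))"
        using that card_copies_K_above_le[OF iii B _ G(1)] lam by (simp add: extensions_at_def Q_def)
      also have "\<dots> \<le> bound"
      proof -
        have "card (fst Gmin) \<le> card (fst (least_primal_at v))" using Gmin G(1) by blast
        then show ?thesis unfolding bound_def using Q lam by (intro mult_mono power_increasing) auto
      qed
      finally show ?thesis .
    qed
    ultimately have "real (card (U v)) \<le> real (card (extensions_at v x n E)) * bound"
      unfolding U_def by (intro real_card_UN_le) auto
    also have "\<dots> \<le> bound"
      using \<open>card (extensions_at v x n E) \<le> 1\<close> Q lam by (intro mult_left_le_one_le) (auto simp: bound_def)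
    finally show "real (card (U v)) \<le> bound" .
  qed
  finally show "real (card {H \<in> copies K n E. x \<in> fst H})
      \<le> real (card (fst K)) * Q ^ card (fst K) * lam ^ (card (fst K) - card (fst Gmin))"
    by (simp add: bound_def mult.assoc)
qed

end

section \<open>The binomial random graph\<close>

lemma sum_Pow_binomial:
  fixes a b :: "'a :: comm_semiring_1"
  assumes "finite X"
  shows "(\<Sum>F\<in>Pow X. a ^ card F * b ^ (card X - card F)) = (a + b) ^ card X"
proof -
  have "(a + b) ^ card X = (\<Prod>x\<in>X. a + b)" by simp
  also have "\<dots> = (\<Sum>F\<in>Pow X. a ^ card F * b ^ card (X - F))"
    using prod_add[OF assms, of "\<lambda>_. a" "\<lambda>_. b"] by simp
  also have "\<dots> = (\<Sum>F\<in>Pow X. a ^ card F * b ^ (card X - card F))"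
    using assms by (intro sum.cong refl) (auto simp: card_Diff_subset finite_subset)
  finally show ?thesis by simp
qed

lemma finite_all_pairs: "finite (all_pairs n)"
  by (rule finite_subset[of _ "Pow {1..n}"]) (auto simp: all_pairs_def)

definition gnp_weight :: "nat \<Rightarrow> real \<Rightarrow> nat set set \<Rightarrow> real" where
  "gnp_weight n p E = p ^ card E * (1 - p) ^ (card (all_pairs n) - card E)"

lemma gnp_prob_eq_sum_weight: "gnp_prob n p P = (\<Sum>E\<in>{E. E \<subseteq> all_pairs n \<and> P E}. gnp_weight n p E)"
  by (simp add: gnp_prob_def gnp_weight_def)

lemma gnp_weight_nonneg: "0 \<le> p \<Longrightarrow> p \<le> 1 \<Longrightarrow> 0 \<le> gnp_weight n p E"
  by (simp add: gnp_weight_def)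

lemma finite_edge_sets: "finite {E. E \<subseteq> all_pairs n \<and> P E}"
  using finite_all_pairs by (rule finite_subset[rotated, OF finite_Pow_iff[THEN iffD2]]) auto

lemma gnp_prob_True: "gnp_prob n p (\<lambda>E. True) = 1"
proof -
  have "{E. E \<subseteq> all_pairs n \<and> True} = Pow (all_pairs n)" by auto
  then show ?thesis
    unfolding gnp_prob_def using sum_Pow_binomial[OF finite_all_pairs, of p "1 - p"] by simp
qed

lemma gnp_prob_compl: "gnp_prob n p P = 1 - gnp_prob n p (\<lambda>E. \<not> P E)"
proof -
  have "gnp_prob n p (\<lambda>E. True) = gnp_prob n p P + gnp_prob n p (\<lambda>E. \<not> P E)"
    unfolding gnp_prob_eq_sum_weight
    by (subst sum.union_disjoint[symmetric]) (auto simp: finite_edge_sets intro!: sum.cong)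
  then show ?thesis using gnp_prob_True by simp
qed

lemma gnp_prob_mono:
  assumes "0 \<le> p" "p \<le> 1" "\<And>E. E \<subseteq> all_pairs n \<Longrightarrow> P E \<Longrightarrow> Q E"
  shows "gnp_prob n p P \<le> gnp_prob n p Q"
  unfolding gnp_prob_eq_sum_weight
  by (rule sum_mono2) (use assms gnp_weight_nonneg finite_edge_sets in auto)

lemma gnp_prob_nonneg: "0 \<le> p \<Longrightarrow> p \<le> 1 \<Longrightarrow> 0 \<le> gnp_prob n p P"
  unfolding gnp_prob_eq_sum_weight by (rule sum_nonneg) (use gnp_weight_nonneg in auto)

lemma gnp_prob_le_1: "0 \<le> p \<Longrightarrow> p \<le> 1 \<Longrightarrow> gnp_prob n p P \<le> 1"
  using gnp_prob_compl[of n p P] gnp_prob_nonneg[of p n "\<lambda>E. \<not> P E"] by simp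

lemma gnp_prob_UN_le:
  assumes p: "0 \<le> p" "p \<le> 1" and I: "finite I"
  shows "gnp_prob n p (\<lambda>E. \<exists>i\<in>I. Q i E) \<le> (\<Sum>i\<in>I. gnp_prob n p (Q i))"
proof -
  let ?U = "{E. E \<subseteq> all_pairs n \<and> (\<exists>i\<in>I. Q i E)}"
  let ?w = "\<lambda>i E. if Q i E then gnp_weight n p E else 0"
  have "(\<Sum>E\<in>?U. gnp_weight n p E) \<le> (\<Sum>E\<in>?U. \<Sum>i\<in>I. ?w i E)"
  proof (rule sum_mono)
    fix E assume "E \<in> ?U"
    then obtain i where i: "i \<in> I" "Q i E" by auto
    then have "gnp_weight n p E = ?w i E" by simp
    also have "\<dots> \<le> (\<Sum>i\<in>I. ?w i E)"
      by (rule member_le_sum[OF i(1)]) (use gnp_weight_nonneg p I in auto)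
    finally show "gnp_weight n p E \<le> (\<Sum>i\<in>I. ?w i E)" .
  qed
  also have "\<dots> = (\<Sum>i\<in>I. \<Sum>E\<in>?U. ?w i E)" by (rule sum.swap)
  also have "\<dots> = (\<Sum>i\<in>I. gnp_prob n p (Q i))"
  proof (rule sum.cong[OF refl])
    fix i assume "i \<in> I"
    have "(\<Sum>E\<in>?U. ?w i E) = (\<Sum>E\<in>{E \<in> ?U. Q i E}. gnp_weight n p E)"
      by (rule sum.inter_filter[OF finite_edge_sets, symmetric])
    also have "{E \<in> ?U. Q i E} = {E. E \<subseteq> all_pairs n \<and> Q i E}" using \<open>i \<in> I\<close> by auto
    finally show "(\<Sum>E\<in>?U. ?w i E) = gnp_prob n p (Q i)" by (simp add: gnp_prob_eq_sum_weight)
  qed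
  finally show ?thesis by (simp add: gnp_prob_eq_sum_weight)
qed

lemma gnp_prob_disj_le:
  assumes "0 \<le> p" "p \<le> 1"
  shows "gnp_prob n p (\<lambda>E. P E \<or> Q E) \<le> gnp_prob n p P + gnp_prob n p Q"
proof -
  have "(\<lambda>E. P E \<or> Q E) = (\<lambda>E. \<exists>i\<in>{0::nat, 1}. (if i = 0 then P else Q) E)" by auto
  then show ?thesis using gnp_prob_UN_le[OF assms, of "{0::nat, 1}" n "\<lambda>i. if i = 0 then P else Q"] by simp
qed

lemma gnp_prob_contains:
  assumes S: "S \<subseteq> all_pairs n"
  shows "gnp_prob n p (\<lambda>E. S \<subseteq> E) = p ^ card S"
proof -
  let ?A = "all_pairs n"
  have fin: "finite ?A" "finite S" using finite_all_pairs S finite_subset by auto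
  have inj: "inj_on (\<lambda>F. F \<union> S) (Pow (?A - S))" by (auto simp: inj_on_def)
  have image: "(\<lambda>F. F \<union> S) ` Pow (?A - S) = {E. E \<subseteq> ?A \<and> S \<subseteq> E}"
  proof (intro equalityI subsetI)
    fix E assume "E \<in> {E. E \<subseteq> ?A \<and> S \<subseteq> E}"
    then have "E = (E - S) \<union> S" "E - S \<in> Pow (?A - S)" by auto
    then show "E \<in> (\<lambda>F. F \<union> S) ` Pow (?A - S)" by blast
  qed (use S in auto)
  have "gnp_prob n p (\<lambda>E. S \<subseteq> E) = (\<Sum>F\<in>Pow (?A - S). gnp_weight n p (F \<union> S))"
    unfolding gnp_prob_eq_sum_weight image[symmetric] by (rule sum.reindex[OF inj, unfolded comp_def])
  also have "\<dots> = (\<Sum>F\<in>Pow (?A - S). p ^ card S * (p ^ card F * (1 - p) ^ (card (?A - S) - card F)))"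
  proof (rule sum.cong[OF refl])
    fix F assume F: "F \<in> Pow (?A - S)"
    then have "finite F" "card F \<le> card (?A - S)" using fin finite_subset by (auto intro: card_mono)
    moreover have "card (F \<union> S) = card F + card S"
      using F fin \<open>finite F\<close> by (subst card_Un_disjoint) auto
    ultimately have "card (F \<union> S) = card F + card S" "card ?A - card (F \<union> S) = card (?A - S) - card F"
      using fin S by (auto simp: card_Diff_subset)
    then show "gnp_weight n p (F \<union> S) = p ^ card S * (p ^ card F * (1 - p) ^ (card (?A - S) - card F))"
      unfolding gnp_weight_def by (simp add: power_add)
  qed
  also have "\<dots> = p ^ card S"
    using sum_Pow_binomial[of "?A - S" p "1 - p"] fin by (simp add: sum_distrib_left[symmetric])
  finally show ?thesis .
qed

lemma gnp_prob_contains_UN_le: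
  assumes p: "0 \<le> p" "p \<le> 1" and I: "finite I" and S: "\<And>i. i \<in> I \<Longrightarrow> S i \<subseteq> all_pairs n"
  shows "gnp_prob n p (\<lambda>E. \<exists>i\<in>I. S i \<subseteq> E) \<le> (\<Sum>i\<in>I. p ^ card (S i))"
  using gnp_prob_UN_le[OF p I, of n "\<lambda>i E. S i \<subseteq> E"] gnp_prob_contains S by simp

lemma binomial_le_power: "n choose k \<le> n ^ k"
proof -
  have "(n choose k) * 1 \<le> (n choose k) * fact k" by (intro mult_le_mono2) (simp add: fact_ge_1)
  then show ?thesis using binomial_fact_pow[of n k] by linarith
qed

lemma card_subsets_le:
  assumes "finite X" "card X \<le> N"
  shows "real (card {T. T \<subseteq> X \<and> card T = k \<and> Q T}) \<le> real N ^ k / fact k"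
proof -
  have "card {T. T \<subseteq> X \<and> card T = k \<and> Q T} \<le> card {T. T \<subseteq> X \<and> card T = k}"
    by (rule card_mono) (use assms(1) in auto)
  also have "\<dots> = card X choose k" by (rule n_subsets[OF assms(1)])
  finally have le: "real (card {T. T \<subseteq> X \<and> card T = k \<and> Q T}) \<le> real (card X choose k)" by simp
  have "real (card X choose k) * fact k \<le> real (card X ^ k)"
    using binomial_fact_pow[of "card X" k] by (metis of_nat_fact of_nat_le_iff of_nat_mult)
  also have "\<dots> \<le> real N ^ k" using assms(2) by (simp add: power_mono)
  finally have "real (card X choose k) \<le> real N ^ k / fact k" by (simp add: field_simps)
  with le show ?thesis by linarith
qed

lemma power_div_fact_le_exp: "real k ^ k / fact k \<le> exp (real k)"
proof -
  have "(\<lambda>n. real k ^ n /\<^sub>R fact n) sums exp (real k)" by (rule exp_converges)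
  then have "summable (\<lambda>n. real k ^ n / fact n)" "exp (real k) = (\<Sum>n. real k ^ n / fact n)"
    by (auto simp: sums_iff divide_inverse mult.commute)
  moreover have "(\<Sum>n\<in>{k}. real k ^ n / fact n) \<le> (\<Sum>n. real k ^ n / fact n)"
    by (rule sum_le_suminf[OF calculation(1)]) auto
  ultimately show ?thesis by simp
qed

lemma power_div_fact_le_half_power:
  fixes c :: real
  assumes "c \<ge> 0" "2 * exp 1 * c \<le> real k"
  shows "c ^ k / fact k \<le> (1/2) ^ k"
proof (cases "k = 0")
  case False
  have "c ^ k / fact k = (c / real k) ^ k * (real k ^ k / fact k)"
    using False by (simp add: power_divide field_simps)
  also have "\<dots> \<le> (c / real k) ^ k * exp (real k)"
    using assms(1) by (intro mult_left_mono power_div_fact_le_exp) simp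
  also have "\<dots> = (c * exp 1 / real k) ^ k"
    by (simp add: power_mult_distrib power_divide exp_of_nat_mult[symmetric] mult.commute)
  also have "\<dots> \<le> (1/2) ^ k"
    using assms False by (intro power_mono) (auto simp: field_simps)
  finally show ?thesis .
qed simp

lemma card_copies_complete_le:
  assumes "graph G"
  shows "card (copies G n (all_pairs n)) \<le> n ^ card (fst G) * 2 ^ 2 ^ card (fst G)"
proof -
  let ?v = "card (fst G)"
  let ?Vs = "{V. V \<subseteq> {1..n} \<and> card V = ?v}"
  have fin: "finite ?Vs" "\<forall>V\<in>?Vs. finite (Pow (Pow V))"
    using finite_subset[of _ "{1..n}"] by (auto intro: finite_subset[of ?Vs "Pow {1..n}"])
  have "copies G n (all_pairs n) \<subseteq> Sigma ?Vs (\<lambda>V. Pow (Pow V))"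
  proof
    fix H assume H: "H \<in> copies G n (all_pairs n)"
    have "card (fst H) = ?v" "fst H \<subseteq> {1..n}" "snd H \<subseteq> Pow (fst H)"
      using card_copies[OF H assms] copies_vertices[OF H] graph_edges_subset_Pow[OF copies_graph[OF H]]
      by auto
    then show "H \<in> Sigma ?Vs (\<lambda>V. Pow (Pow V))" by (cases H) auto
  qed
  then have "card (copies G n (all_pairs n)) \<le> card (Sigma ?Vs (\<lambda>V. Pow (Pow V)))"
    using fin by (intro card_mono) auto
  also have "\<dots> = (\<Sum>V\<in>?Vs. 2 ^ 2 ^ ?v)"
    using fin finite_subset[of _ "{1..n}"] by (simp add: card_SigmaI card_Pow)
  also have "\<dots> = (n choose ?v) * 2 ^ 2 ^ ?v" using n_subsets[of "{1..n}" ?v] by simp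
  also have "\<dots> \<le> n ^ ?v * 2 ^ 2 ^ ?v" by (simp add: binomial_le_power)
  finally show ?thesis .
qed

lemma card_extensions_le:
  assumes G1: "graph G1" and H0: "finite (fst H0)" "card (fst H0) \<le> card (fst G1)"
  shows "card {H \<in> copies G1 n (all_pairs n). graph_le H0 H}
    \<le> n ^ (card (fst G1) - card (fst H0)) * 2 ^ 2 ^ card (fst G1)"
proof -
  define m where "m = card (fst G1) - card (fst H0)"
  define Ws where "Ws = {W. W \<subseteq> {1..n} \<and> card W = m}"
  define S where "S = Sigma Ws (\<lambda>W. Pow (Pow (fst H0 \<union> W)))"
  have fin_W: "finite W" if "W \<in> Ws" for W
  proof -
    have "W \<subseteq> {1..n}" using that by (simp add: Ws_def)
    then show ?thesis by (rule finite_subset) simp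
  qed
  have fin_Ws: "finite Ws" by (rule finite_subset[of _ "Pow {1..n}"]) (auto simp: Ws_def)
  have fin_S: "finite S"
    unfolding S_def using fin_Ws fin_W H0(1) by (intro finite_SigmaI) auto
  have "{H \<in> copies G1 n (all_pairs n). graph_le H0 H} \<subseteq> (\<lambda>(W, E). (fst H0 \<union> W, E)) ` S"
  proof
    fix H assume "H \<in> {H \<in> copies G1 n (all_pairs n). graph_le H0 H}"
    then have H: "H \<in> copies G1 n (all_pairs n)" "fst H0 \<subseteq> fst H" by (auto simp: graph_le_def)
    define W where "W = fst H - fst H0"
    have "card (fst H) = card (fst G1)" "finite (fst H)"
      using card_copies[OF H(1) G1] graph_finite_vertices[OF copies_graph[OF H(1)]] by auto
    then have "card W = m"
      using H(2) by (simp add: W_def m_def card_Diff_subset[OF finite_subset[OF H(2)]])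
    moreover have "W \<subseteq> {1..n}" "fst H0 \<union> W = fst H" using copies_vertices[OF H(1)] H(2) by (auto simp: W_def)
    moreover have "snd H \<subseteq> Pow (fst H)" by (rule graph_edges_subset_Pow[OF copies_graph[OF H(1)]])
    ultimately have "(W, snd H) \<in> S" "H = (fst H0 \<union> W, snd H)" by (auto simp: S_def Ws_def)
    then show "H \<in> (\<lambda>(W, E). (fst H0 \<union> W, E)) ` S" by force
  qed
  then have "card {H \<in> copies G1 n (all_pairs n). graph_le H0 H} \<le> card ((\<lambda>(W, E). (fst H0 \<union> W, E)) ` S)"
    by (rule card_mono[OF finite_imageI[OF fin_S]])
  also have "\<dots> \<le> card S" by (rule card_image_le[OF fin_S])
  also have "\<dots> = (\<Sum>W\<in>Ws. card (Pow (Pow (fst H0 \<union> W))))"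
    unfolding S_def using fin_Ws fin_W H0(1) by (simp add: card_SigmaI)
  also have "\<dots> \<le> (\<Sum>W\<in>Ws. 2 ^ 2 ^ card (fst G1))"
  proof (rule sum_mono)
    fix W assume W: "W \<in> Ws"
    then have "card (fst H0 \<union> W) \<le> card (fst G1)"
      using card_Un_le[of "fst H0" W] H0(2) by (simp add: Ws_def m_def)
    then show "card (Pow (Pow (fst H0 \<union> W))) \<le> 2 ^ 2 ^ card (fst G1)"
      using H0(1) fin_W[OF W] by (simp add: card_Pow power_increasing)
  qed
  also have "\<dots> = (n choose m) * 2 ^ 2 ^ card (fst G1)" using n_subsets[of "{1..n}" m] by (simp add: Ws_def)
  also have "\<dots> \<le> n ^ m * 2 ^ 2 ^ card (fst G1)" by (simp add: binomial_le_power)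
  finally show ?thesis by (simp add: m_def)
qed

section \<open>Many disjoint extensions are unlikely\<close>

definition disjoint_outside :: "nat graph \<Rightarrow> nat graph set \<Rightarrow> bool" where
  "disjoint_outside H0 T \<longleftrightarrow>
     (\<forall>H\<in>T. \<forall>H'\<in>T. H \<noteq> H' \<longrightarrow> (fst H - fst H0) \<inter> (fst H' - fst H0) = {})"

definition disjoint_extensions :: "nat \<Rightarrow> nat \<Rightarrow> 'v graph \<Rightarrow> 'v graph \<Rightarrow> nat set set \<Rightarrow> bool" where
  "disjoint_extensions n k G0 G1 E \<longleftrightarrow> (\<exists>H0\<in>copies G0 n (all_pairs n). \<exists>T.
     T \<subseteq> {H \<in> copies G1 n (all_pairs n). graph_le H0 H} \<and> card T = k \<and> disjoint_outside H0 T \<and>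
     snd H0 \<union> \<Union>(snd ` T) \<subseteq> E)"

context balanced_graph
begin

lemma edges_within_copy:
  assumes G0: "primal G0 K" and G1: "primal G1 K"
    and H0: "H0 \<in> copies G0 n X" and H: "H \<in> copies G1 n Y" and le: "graph_le H0 H"
  shows "{e \<in> snd H. e \<subseteq> fst H0} = snd H0"
proof -
  obtain \<phi> where inj: "inj_on \<phi> (fst G1)" and H_eq: "H = graph_image \<phi> G1"
    using copiesE[OF H primal_graph[OF G1]] by blast
  have "sparse d G1" using sparse_subgraph[OF sparse_K] G1 by (simp add: primal_def)
  then have sparse_H: "sparse d H" using sparse_graph_image[OF primal_graph[OF G1] inj] H_eq by simp
  let ?S = "(fst H0, {e \<in> snd H. e \<subseteq> fst H0})"
  have "graph ?S" by (rule graph_if_edges_within[OF _ copies_graph[OF H]]) (use le in \<open>auto simp: graph_le_def\<close>)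
  moreover have "graph_le ?S H" using le by (auto simp: graph_le_def)
  ultimately have "real (card {e \<in> snd H. e \<subseteq> fst H0}) \<le> d * real (card (fst H0))"
    using sparse_H unfolding sparse_def subgraph_def by (metis fst_conv snd_conv)
  moreover have "card (fst H0) = card (fst G0)" "card (snd H0) = card (snd G0)"
    using card_copies[OF H0 primal_graph[OF G0]] by auto
  moreover have "real (card (snd G0)) = d * real (card (fst G0))" using G0 primal_iff by blast
  ultimately have "card {e \<in> snd H. e \<subseteq> fst H0} \<le> card (snd H0)" by simp
  moreover have "snd H0 \<subseteq> {e \<in> snd H. e \<subseteq> fst H0}"
    using le graph_edge_subset[OF copies_graph[OF H0]] by (auto simp: graph_le_def)
  moreover have "finite {e \<in> snd H. e \<subseteq> fst H0}" using graph_finite_edges[OF copies_graph[OF H]] by simp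
  ultimately show ?thesis by (metis card_seteq)
qed

text \<open>Extensions that are vertex-disjoint outside \<open>H\<^sub>0\<close> are also edge-disjoint outside \<open>H\<^sub>0\<close>,
  since the edges of an extension inside \<open>V(H\<^sub>0)\<close> are exactly those of \<open>H\<^sub>0\<close>.\<close>

lemma card_edges_disjoint_extensions:
  assumes G0: "primal G0 K" and G1: "primal G1 K" and H0: "H0 \<in> copies G0 n (all_pairs n)"
    and T: "T \<subseteq> {H \<in> copies G1 n (all_pairs n). graph_le H0 H}" and disjoint: "disjoint_outside H0 T"
  shows "card (snd G0) + card T * (card (snd G1) - card (snd G0)) \<le> card (snd H0 \<union> \<Union>(snd ` T))"
proof -
  have T_copies: "H \<in> copies G1 n (all_pairs n)" "graph_le H0 H" if "H \<in> T" for H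
    using T that by auto
  have "finite {H \<in> copies G1 n (all_pairs n). graph_le H0 H}"
    using finite_copies[of G1 n "all_pairs n"] by simp
  then have finite_T: "finite T" using T by (rule finite_subset[rotated])
  have finite_new: "finite (snd H - snd H0)" if "H \<in> T" for H
    using graph_finite_edges[OF copies_graph[OF T_copies(1)[OF that]]] by simp
  have "(snd H - snd H0) \<inter> (snd H' - snd H0) = {}" if "H \<in> T" "H' \<in> T" "H \<noteq> H'" for H H'
  proof (rule ccontr)
    assume "(snd H - snd H0) \<inter> (snd H' - snd H0) \<noteq> {}"
    then obtain e where e: "e \<in> snd H" "e \<in> snd H'" "e \<notin> snd H0" by blast
    have "e \<subseteq> fst H" "e \<subseteq> fst H'"
      using graph_edge_subset[OF copies_graph[OF T_copies(1)[OF that(1)]] e(1)]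
        graph_edge_subset[OF copies_graph[OF T_copies(1)[OF that(2)]] e(2)] by auto
    moreover have "(fst H - fst H0) \<inter> (fst H' - fst H0) = {}"
      using disjoint that by (simp add: disjoint_outside_def)
    ultimately have "e \<subseteq> fst H0" by blast
    then have "e \<in> snd H0" using edges_within_copy[OF G0 G1 H0 T_copies[OF that(1)]] e(1) by blast
    then show False using e by simp
  qed
  then have "card (\<Union>H\<in>T. snd H - snd H0) = (\<Sum>H\<in>T. card (snd H - snd H0))"
    using finite_T finite_new by (intro card_UN_disjoint) auto
  also have "\<dots> = card T * (card (snd G1) - card (snd G0))"
  proof -
    have "card (snd H - snd H0) = card (snd G1) - card (snd G0)" if "H \<in> T" for H
    proof -
      have "snd H0 \<subseteq> snd H" using T_copies(2)[OF that] by (simp add: graph_le_def)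
      moreover have "finite (snd H)" using graph_finite_edges[OF copies_graph[OF T_copies(1)[OF that]]] .
      ultimately have "card (snd H - snd H0) = card (snd H) - card (snd H0)"
        by (simp add: card_Diff_subset finite_subset)
      then show ?thesis
        using card_copies[OF T_copies(1)[OF that] primal_graph[OF G1]] card_copies[OF H0 primal_graph[OF G0]]
        by simp
    qed
    then show ?thesis by simp
  qed
  finally have "card (snd H0 \<union> (\<Union>H\<in>T. snd H - snd H0))
      = card (snd H0) + card T * (card (snd G1) - card (snd G0))"
    using graph_finite_edges[OF copies_graph[OF H0]] finite_T finite_new
    by (subst card_Un_disjoint) auto
  moreover have "snd H0 \<union> \<Union>(snd ` T) = snd H0 \<union> (\<Union>H\<in>T. snd H - snd H0)" by auto
  moreover have "card (snd H0) = card (snd G0)" using card_copies[OF H0 primal_graph[OF G0]] by simp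
  ultimately show ?thesis by (metis order_refl)
qed

lemma disjoint_extensions_prob_le:
  assumes G0: "primal G0 K" and G1: "primal G1 K" and card_le: "card (fst G0) \<le> card (fst G1)"
    and p: "0 \<le> p" "p \<le> 1"
  shows "gnp_prob n p (disjoint_extensions n k G0 G1) \<le>
    real (n ^ card (fst G0) * 2 ^ 2 ^ card (fst G0))
      * real (n ^ (card (fst G1) - card (fst G0)) * 2 ^ 2 ^ card (fst G1)) ^ k / fact k
      * p ^ (card (snd G0) + k * (card (snd G1) - card (snd G0)))"
proof -
  let ?C0 = "copies G0 n (all_pairs n)"
  let ?X = "\<lambda>H0. {H \<in> copies G1 n (all_pairs n). graph_le H0 H}"
  let ?Ts = "\<lambda>H0. {T. T \<subseteq> ?X H0 \<and> card T = k \<and> disjoint_outside H0 T}"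
  let ?I = "Sigma ?C0 ?Ts"
  let ?S = "\<lambda>i. snd (fst i) \<union> \<Union>(snd ` snd i)"
  let ?N = "card (snd G0) + k * (card (snd G1) - card (snd G0))"
  let ?N1 = "n ^ (card (fst G1) - card (fst G0)) * 2 ^ 2 ^ card (fst G1)"
  have finite_X: "finite (?X H0)" for H0
    by (rule finite_subset[OF _ finite_copies[of G1 n "all_pairs n"]]) auto
  have finite_Ts: "finite (?Ts H0)" for H0
    using finite_X[of H0] by (rule finite_subset[rotated, OF finite_Pow_iff[THEN iffD2]]) auto
  have finite_I: "finite ?I" by (rule finite_SigmaI[OF finite_copies finite_Ts])
  have S_pairs: "?S i \<subseteq> all_pairs n" if "i \<in> ?I" for i
    using that copies_edges by (cases i) fastforce
  have "gnp_prob n p (disjoint_extensions n k G0 G1) \<le> gnp_prob n p (\<lambda>E. \<exists>i\<in>?I. ?S i \<subseteq> E)"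
    by (rule gnp_prob_mono[OF p]) (auto simp: disjoint_extensions_def)
  also have "\<dots> \<le> (\<Sum>i\<in>?I. p ^ card (?S i))" by (rule gnp_prob_contains_UN_le[OF p finite_I S_pairs])
  also have "\<dots> \<le> (\<Sum>i\<in>?I. p ^ ?N)"
  proof (rule sum_mono)
    fix i assume "i \<in> ?I"
    then have "?N \<le> card (?S i)"
      using card_edges_disjoint_extensions[OF G0 G1, of "fst i" n "snd i"] by (auto simp: split_beta)
    then show "p ^ card (?S i) \<le> p ^ ?N" using p by (intro power_decreasing) auto
  qed
  also have "\<dots> = real (card ?I) * p ^ ?N" by simp
  also have "\<dots> \<le> (real (card ?C0) * (real ?N1 ^ k / fact k)) * p ^ ?N"
  proof (rule mult_right_mono)
    have "real (card ?I) = (\<Sum>H0\<in>?C0. real (card (?Ts H0)))"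
      using finite_copies[of G0 n "all_pairs n"] finite_Ts by (simp add: card_SigmaI)
    also have "\<dots> \<le> (\<Sum>H0\<in>?C0. real ?N1 ^ k / fact k)"
    proof (rule sum_mono)
      fix H0 assume H0: "H0 \<in> ?C0"
      have "card (fst H0) = card (fst G0)" using card_copies[OF H0 primal_graph[OF G0]] by simp
      then have "card (?X H0) \<le> ?N1"
        using card_extensions_le[OF primal_graph[OF G1] graph_finite_vertices[OF copies_graph[OF H0]]]
          card_le by simp
      then show "real (card (?Ts H0)) \<le> real ?N1 ^ k / fact k" by (rule card_subsets_le[OF finite_X])
    qed
    finally show "real (card ?I) \<le> real (card ?C0) * (real ?N1 ^ k / fact k)" by simp
  qed (use p in simp)
  also have "\<dots> \<le> (real (n ^ card (fst G0) * 2 ^ 2 ^ card (fst G0)) * (real ?N1 ^ k / fact k)) * p ^ ?N"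
  proof (intro mult_right_mono)
    show "real (card ?C0) \<le> real (n ^ card (fst G0) * 2 ^ 2 ^ card (fst G0))"
      using card_copies_complete_le[OF primal_graph[OF G0], of n] by (simp only: of_nat_le_iff)
  qed (use p in auto)
  finally show ?thesis by simp
qed

lemma power_card_edges_primal:
  assumes "primal G K" "p > 0"
  shows "p ^ card (snd G) = (p powr d) ^ card (fst G)"
proof -
  have "p ^ card (snd G) = p powr real (card (snd G))" using assms(2) by (simp add: powr_realpow)
  also have "\<dots> = (p powr d) powr real (card (fst G))"
    using assms(1) by (simp add: primal_iff powr_powr)
  also have "\<dots> = (p powr d) ^ card (fst G)" using assms(2) by (simp add: powr_realpow)
  finally show ?thesis .
qed

text \<open>With \<open>k\<close> of order \<open>B \<lambda>^m\<close> the union bound above becomes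
  \<open>(c\<^sub>0 \<lambda>^v\<^sub>0) (c\<^sub>1 \<lambda>^m)^k / k!\<close>, and \<open>k! \<ge> (k/e)^k\<close> makes the second factor at most
  \<open>2^(-k) \<le> 2^(-\<lambda>)\<close>.\<close>

lemma disjoint_extensions_prob_le_half_powr:
  assumes cover: "primal_cover K G0 G1" and p: "0 < p" "p \<le> 1"
    and lam: "lam = real n * p powr d" "lam \<ge> 1"
    and B: "B \<ge> 2 * exp 1 * 2 ^ 2 ^ card (fst G1)"
    and k: "k = nat \<lfloor>B * lam ^ (card (fst G1) - card (fst G0))\<rfloor> + 1"
  shows "gnp_prob n p (disjoint_extensions n k G0 G1) \<le> 2 ^ 2 ^ card (fst G0) * lam ^ card (fst G0) * (1/2) powr lam"
proof -
  have G0: "primal G0 K" and G1: "primal G1 K" using cover by (auto simp: primal_cover_def)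
  define v0 where "v0 = card (fst G0)"
  define m where "m = card (fst G1) - card (fst G0)"
  define c0 :: real where "c0 = 2 ^ 2 ^ v0"
  define c1 :: real where "c1 = 2 ^ 2 ^ card (fst G1)"
  have v0_less: "v0 < card (fst G1)" using primal_cover_card_less[OF cover] by (simp add: v0_def)
  have edges_le: "card (snd G0) \<le> card (snd G1)"
    using G0 G1 v0_less d_pos unfolding primal_iff v0_def
    by (metis less_imp_le_nat mult_le_cancel_left_pos of_nat_le_iff)
  have p0: "p ^ card (snd G0) = (p powr d) ^ v0"
    using power_card_edges_primal[OF G0 p(1)] by (simp add: v0_def)
  have "p ^ card (snd G0) * p ^ (card (snd G1) - card (snd G0)) = (p powr d) ^ v0 * (p powr d) ^ m"
    using power_card_edges_primal[OF G1 p(1)] edges_le v0_less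
    by (simp add: power_add[symmetric] v0_def m_def)
  then have p_diff: "p ^ (card (snd G1) - card (snd G0)) = (p powr d) ^ m" using p0 p(1) by simp
  have "p ^ (card (snd G0) + k * (card (snd G1) - card (snd G0))) = (p powr d) ^ v0 * ((p powr d) ^ m) ^ k"
    unfolding power_add p0 p_diff[symmetric] by (metis power_mult mult.commute)
  then have "gnp_prob n p (disjoint_extensions n k G0 G1)
      \<le> real (n ^ v0 * 2 ^ 2 ^ v0) * real (n ^ m * 2 ^ 2 ^ card (fst G1)) ^ k / fact k
        * ((p powr d) ^ v0 * ((p powr d) ^ m) ^ k)"
    using disjoint_extensions_prob_le[OF G0 G1 _ less_imp_le[OF p(1)] p(2), of n k] v0_less
    by (simp add: v0_def m_def)
  also have "\<dots> = (c0 * lam ^ v0) * ((c1 * lam ^ m) ^ k / fact k)"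
    unfolding lam(1) c0_def c1_def by (simp add: power_mult_distrib field_simps)
  also have "\<dots> \<le> (c0 * lam ^ v0) * (1/2) powr lam"
  proof (rule mult_left_mono)
    have "(1::real) * 1 * 1 \<le> 2 * exp 1 * c1" unfolding c1_def by (intro mult_mono) auto
    then have B1: "B \<ge> 1" using B by (simp add: c1_def)
    have "B * lam ^ m < real k"
      using k B1 lam(2) by (simp add: m_def) linarith
    moreover have "lam \<le> B * lam ^ m"
    proof -
      have "m \<ge> 1" using v0_less by (simp add: m_def v0_def)
      then have "lam \<le> lam ^ m" using lam(2) by (metis power_increasing power_one_right)
      also have "\<dots> \<le> B * lam ^ m" using B1 lam(2) by (simp add: mult_le_cancel_right1)
      finally show ?thesis .
    qed
    moreover have "2 * exp 1 * (c1 * lam ^ m) \<le> B * lam ^ m"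
      using B lam(2) by (simp add: c1_def mult_right_mono)
    ultimately have "lam \<le> real k" "2 * exp 1 * (c1 * lam ^ m) \<le> real k" by linarith+
    then have "(c1 * lam ^ m) ^ k / fact k \<le> (1/2) ^ k"
      using lam(2) by (intro power_div_fact_le_half_power) (auto simp: c1_def)
    also have "\<dots> = (1/2) powr real k" by (simp add: powr_realpow)
    also have "\<dots> \<le> (1/2) powr lam" using \<open>lam \<le> real k\<close> by (intro powr_mono') auto
    finally show "(c1 * lam ^ m) ^ k / fact k \<le> (1/2) powr lam" .
  qed (use lam(2) in \<open>simp add: c0_def\<close>)
  finally show ?thesis by (simp add: c0_def v0_def)
qed

lemma disjoint_extensions_if_many_extensions:
  assumes E: "E \<subseteq> all_pairs n" and ii: "prop_ii K n E" and cover: "primal_cover K G0 G1"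
    and H0: "H0 \<in> copies G0 n E" and k: "k \<le> card {H1 \<in> copies G1 n E. graph_le H0 H1}"
  shows "disjoint_extensions n k G0 G1 E"
proof -
  obtain T where T: "T \<subseteq> {H1 \<in> copies G1 n E. graph_le H0 H1}" "card T = k"
    using obtain_subset_with_card_n[OF k] by blast
  have "T \<subseteq> {H \<in> copies G1 n (all_pairs n). graph_le H0 H}" using T(1) copies_mono[OF E] by blast
  moreover have "disjoint_outside H0 T"
    using ii cover H0 T(1) unfolding prop_ii_def disjoint_outside_def by blast
  moreover have "snd H0 \<union> \<Union>(snd ` T) \<subseteq> E" using copies_edges[OF H0] T(1) copies_edges by blast
  moreover have "H0 \<in> copies G0 n (all_pairs n)" using copies_mono[OF E] H0 by blast
  ultimately show ?thesis using T(2) unfolding disjoint_extensions_def by blast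
qed

end

section \<open>Local sparsity is likely\<close>

lemma sum_subsets_by_card:
  fixes f :: "nat \<Rightarrow> real"
  assumes "finite A"
  shows "(\<Sum>V\<in>{V. V \<subseteq> A \<and> card V \<le> M}. f (card V)) = (\<Sum>k\<le>M. real (card A choose k) * f k)"
proof -
  have by_card: "{V. V \<subseteq> A \<and> card V \<le> M} = (\<Union>k\<le>M. {V. V \<subseteq> A \<and> card V = k})" by auto
  have "(\<Sum>V\<in>{V. V \<subseteq> A \<and> card V \<le> M}. f (card V))
      = (\<Sum>k\<le>M. \<Sum>V\<in>{V. V \<subseteq> A \<and> card V = k}. f (card V))"
    unfolding by_card using assms
    by (intro sum.UNION_disjoint) (auto intro: finite_subset[of _ "Pow A"])
  also have "\<dots> = (\<Sum>k\<le>M. real (card A choose k) * f k)"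
    using n_subsets[OF assms] by (intro sum.cong) auto
  finally show ?thesis .
qed

context balanced_graph
begin

text \<open>Since \<open>d = e_K / v_K\<close>, an edge count exceeding \<open>d b\<close> exceeds it by at least \<open>1 / v_K\<close>.\<close>

lemma card_ge_if_denser: "real a > d * real b \<Longrightarrow> real a \<ge> d * real b + 1 / real (card (fst K))"
proof -
  assume a: "real a > d * real b"
  let ?v = "card (fst K)" and ?e = "card (snd K)"
  have v: "real ?v > 0" using card_vertices_K_pos by simp
  have d: "d = real ?e / real ?v" by (simp add: d_def dens_def)
  have "real a * real ?v > real ?e * real b" using a v by (simp add: d field_simps)
  then have "a * ?v \<ge> ?e * b + 1" by (metis Suc_eq_plus1 Suc_leI of_nat_less_iff of_nat_mult)
  then have "real a * real ?v \<ge> real ?e * real b + 1" by (metis of_nat_1 of_nat_add of_nat_le_iff of_nat_mult)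
  then show ?thesis using v by (simp add: d field_simps)
qed

lemma not_locally_sparse_prob_le:
  assumes p: "0 < p" "p \<le> 1"
  shows "gnp_prob n p (\<lambda>E. \<not> locally_sparse n E) \<le> 2 ^ 2 ^ (2 * card (fst K))
    * (\<Sum>k\<le>2 * card (fst K). real n ^ k * p powr (d * real k + 1 / real (card (fst K))))"
proof -
  define M where "M = 2 * card (fst K)"
  define g where "g = (\<lambda>k. p powr (d * real k + 1 / real (card (fst K))))"
  define Vs where "Vs = {V. V \<subseteq> {1..n} \<and> card V \<le> M}"
  define I where "I = {(V, S). V \<in> Vs \<and> S \<subseteq> {e \<in> all_pairs n. e \<subseteq> V} \<and> d * real (card V) < real (card S)}"
  have finite_V: "finite V" if "V \<in> Vs" for V
    using that finite_subset[of V "{1..n}"] by (simp add: Vs_def)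
  have finite_Vs: "finite Vs" by (rule finite_subset[of _ "Pow {1..n}"]) (auto simp: Vs_def)
  have finite_Sigma: "finite (Sigma Vs (\<lambda>V. Pow (Pow V)))"
    using finite_Vs finite_V by (intro finite_SigmaI) auto
  have I_Sigma: "I \<subseteq> Sigma Vs (\<lambda>V. Pow (Pow V))" by (auto simp: I_def)
  have "gnp_prob n p (\<lambda>E. \<not> locally_sparse n E) \<le> gnp_prob n p (\<lambda>E. \<exists>i\<in>I. snd i \<subseteq> E)"
  proof (rule gnp_prob_mono)
    fix E assume E: "E \<subseteq> all_pairs n" "\<not> locally_sparse n E"
    then obtain V where "V \<in> Vs" "d * real (card V) < real (card {e \<in> E. e \<subseteq> V})"
      unfolding locally_sparse_def Vs_def M_def by auto
    moreover have "{e \<in> E. e \<subseteq> V} \<subseteq> {e \<in> all_pairs n. e \<subseteq> V}" using E(1) by blast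
    ultimately have "(V, {e \<in> E. e \<subseteq> V}) \<in> I" by (simp add: I_def)
    then show "\<exists>i\<in>I. snd i \<subseteq> E" by force
  qed (use p in auto)
  also have "\<dots> \<le> (\<Sum>i\<in>I. p ^ card (snd i))"
    using p finite_subset[OF I_Sigma finite_Sigma] by (intro gnp_prob_contains_UN_le) (auto simp: I_def)
  also have "\<dots> \<le> (\<Sum>i\<in>I. g (card (fst i)))"
  proof (rule sum_mono)
    fix i assume "i \<in> I"
    then have "real (card (snd i)) \<ge> d * real (card (fst i)) + 1 / real (card (fst K))"
      by (intro card_ge_if_denser) (auto simp: I_def)
    then show "p ^ card (snd i) \<le> g (card (fst i))"
      unfolding g_def using p by (simp add: powr_realpow[symmetric] powr_mono')
  qed
  also have "\<dots> \<le> (\<Sum>i\<in>Sigma Vs (\<lambda>V. Pow (Pow V)). g (card (fst i)))"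
    by (rule sum_mono2[OF finite_Sigma I_Sigma]) (simp add: g_def)
  also have "\<dots> = (\<Sum>V\<in>Vs. \<Sum>S\<in>Pow (Pow V). g (card V))"
    using sum.Sigma[OF finite_Vs, of "\<lambda>V. Pow (Pow V)" "\<lambda>V S. g (card V)"] finite_V
    by (simp add: split_beta)
  also have "\<dots> = (\<Sum>V\<in>Vs. 2 ^ 2 ^ card V * g (card V))"
    using finite_V by (intro sum.cong) (auto simp: card_Pow)
  also have "\<dots> \<le> (\<Sum>V\<in>Vs. 2 ^ 2 ^ M * g (card V))"
    by (intro sum_mono mult_right_mono) (auto simp: Vs_def g_def)
  also have "\<dots> = 2 ^ 2 ^ M * (\<Sum>k\<le>M. real (n choose k) * g k)"
    unfolding Vs_def by (simp add: sum_distrib_left[symmetric] sum_subsets_by_card)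
  also have "\<dots> \<le> 2 ^ 2 ^ M * (\<Sum>k\<le>M. real n ^ k * g k)"
    using binomial_le_power by (intro mult_left_mono sum_mono mult_right_mono)
      (auto simp: g_def of_nat_power[symmetric] simp del: of_nat_power)
  finally show ?thesis by (simp add: M_def g_def)
qed

end

lemma n_mult_powr_tendsto_at_top:
  fixes p :: "nat \<Rightarrow> real"
  assumes d: "d > 0" and p: "\<And>n. 0 \<le> p n" and lower: "(\<lambda>n. real n powr (- 1 / d)) \<in> o(p)"
  shows "filterlim (\<lambda>n. real n * p n powr d) at_top sequentially"
proof (rule filterlim_at_top[THEN iffD2], intro allI)
  fix Z :: real
  define Z' where "Z' = max Z 1"
  have Z': "Z' \<ge> 1" by (simp add: Z'_def)
  have "eventually (\<lambda>n. norm (real n powr (- 1 / d)) \<le> Z' powr (- 1 / d) * norm (p n)) sequentially"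
    using Z' by (intro landau_o.smallD[OF lower]) simp
  then show "eventually (\<lambda>n. Z \<le> real n * p n powr d) sequentially"
    using eventually_ge_at_top[of 1]
  proof eventually_elim
    case (elim n)
    then have n: "real n \<ge> 1" by simp
    have le: "real n powr (- 1 / d) / Z' powr (- 1 / d) \<le> p n"
      using elim(1) p[of n] Z' by (simp add: field_simps)
    have "Z' / real n = real n powr (- 1 / d * d) / Z' powr (- 1 / d * d)"
      using d n Z' by (simp add: powr_minus divide_inverse)
    also have "\<dots> = (real n powr (- 1 / d) / Z' powr (- 1 / d)) powr d"
      using n Z' by (simp add: powr_divide powr_powr)
    also have "\<dots> \<le> p n powr d" using le d n Z' by (intro powr_mono2) auto
    finally have "Z' \<le> real n * p n powr d" using n by (simp add: divide_le_eq mult.commute)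
    then show ?case by (simp add: Z'_def)
  qed
qed

lemma eventually_pos_if_smallo:
  fixes p :: "nat \<Rightarrow> real"
  assumes p: "\<And>n. 0 \<le> p n" and lower: "(\<lambda>n. real n powr a) \<in> o(p)"
  shows "eventually (\<lambda>n. p n > 0) sequentially"
  using landau_o.smallD[OF lower zero_less_one] eventually_ge_at_top[of 1]
proof eventually_elim
  case (elim n)
  then have "0 < real n powr a" "real n powr a \<le> p n" using p[of n] by auto
  then show ?case by linarith
qed

lemma tendsto_power_mult_half_powr:
  fixes lam :: "nat \<Rightarrow> real"
  assumes "filterlim lam at_top sequentially"
  shows "(\<lambda>n. c * lam n ^ v * (1/2) powr lam n) \<longlonglongrightarrow> 0"
proof -
  have "((\<lambda>x::real. x ^ v * (1/2) powr x) \<longlongrightarrow> 0) at_top" by real_asymp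
  then have "(\<lambda>n. lam n ^ v * (1/2) powr lam n) \<longlonglongrightarrow> 0"
    using filterlim_compose assms by blast
  then show ?thesis using tendsto_mult_right_zero[of _ sequentially c] by (simp add: mult.assoc)
qed

text \<open>The \<open>k\<close>-th term is at most a constant times \<open>n^k (n^(\<beta> - 1/d))^(d k + 1/v)\<close>, whose
  exponent \<open>\<beta> (d k + 1/v) - 1/(d v)\<close> is negative for this choice of \<open>\<beta>\<close>.\<close>

lemma tendsto_local_density_bound:
  fixes p :: "nat \<Rightarrow> real" and d v :: real and M :: nat
  assumes d: "d > 0" and v: "v \<ge> 1" and p: "\<And>n. 0 \<le> p n"
    and upper: "p \<in> O(\<lambda>n. real n powr (1 / (2 * d * v * (d * real M + 1)) - 1 / d))"
  shows "(\<lambda>n. \<Sum>k\<le>M. real n ^ k * p n powr (d * real k + 1 / v)) \<longlonglongrightarrow> 0"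
proof -
  define \<beta> where "\<beta> = 1 / (2 * d * v * (d * real M + 1))"
  obtain c where c: "c > 0"
    and ev: "eventually (\<lambda>n. norm (p n) \<le> c * norm (real n powr (\<beta> - 1 / d))) sequentially"
    using landau_o.bigE[OF upper] unfolding \<beta>_def by blast
  have M: "d * real M + 1 > 0" using d by (simp add: add_nonneg_pos)
  have "(\<lambda>n. real n ^ k * p n powr (d * real k + 1 / v)) \<longlonglongrightarrow> 0" if k: "k \<le> M" for k
  proof -
    define a where "a = d * real k + 1 / v"
    define e where "e = real k + (\<beta> - 1 / d) * a"
    have a: "a \<ge> 0" using d v by (simp add: a_def)
    have "d * real k \<le> d * real M" "1 / v \<le> 1" using k d v by auto
    then have "a \<le> d * real M + 1" unfolding a_def by linarith
    then have "\<beta> * a \<le> \<beta> * (d * real M + 1)"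
      using d v M by (intro mult_left_mono) (auto simp: \<beta>_def)
    also have "\<dots> = 1 / (2 * d * v)" using M by (simp add: \<beta>_def)
    moreover have "e = \<beta> * a - 1 / (d * v)" using d v by (simp add: e_def a_def field_simps)
    ultimately have "e \<le> 1 / (2 * d * v) - 1 / (d * v)" by linarith
    also have "\<dots> < 0" using d v by (simp add: field_simps)
    finally have e: "e < 0" .
    show ?thesis
    proof (rule tendsto_sandwich[OF _ _ tendsto_const])
      show "eventually (\<lambda>n. real n ^ k * p n powr (d * real k + 1 / v) \<le> c powr a * real n powr e) sequentially"
        using ev eventually_ge_at_top[of 1]
      proof eventually_elim
        case (elim n)
        then have n: "real n \<ge> 1" by simp
        have "p n powr a \<le> (c * real n powr (\<beta> - 1 / d)) powr a"
          using elim(1) p[of n] a by (intro powr_mono2) auto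
        also have "\<dots> = c powr a * real n powr ((\<beta> - 1 / d) * a)"
          using c n by (simp add: powr_mult powr_powr)
        finally have "real n ^ k * p n powr a \<le> real n powr real k * (c powr a * real n powr ((\<beta> - 1 / d) * a))"
          using n by (simp add: powr_realpow mult_left_mono)
        also have "\<dots> = c powr a * real n powr e" using n by (simp add: powr_add[symmetric] e_def)
        finally show ?case by (simp add: a_def)
      qed
      show "(\<lambda>n. c powr a * real n powr e) \<longlonglongrightarrow> 0"
        using tendsto_mult_right_zero[OF tendsto_neg_powr[OF e filterlim_real_sequentially]] by simp
    qed simp
  qed
  then show ?thesis by (intro tendsto_null_sum) auto
qed

context balanced_graph
begin

text \<open>The constants of the theorem: \<open>\<beta>\<close> makes every term in the bound for non-local-sparsity
  vanish, \<open>B\<close> makes the probability of too many disjoint extensions at most \<open>2^(-\<lambda>)\<close>, and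
  \<open>C\<close> collects the factor \<open>#primal \<cdot> B\<close> of each of the at most \<open>v_K\<close> cover steps in (v).\<close>

definition beta_K :: real where
  "beta_K = 1 / (2 * d * real (card (fst K)) * (d * real (2 * card (fst K)) + 1))"

definition B_K :: real where
  "B_K = 2 * exp 1 * 2 ^ 2 ^ card (fst K)"

definition C_K :: real where
  "C_K = real (card (fst K)) * (real (card {J. primal J K}) * B_K) ^ card (fst K)"

lemma beta_K_pos: "beta_K > 0"
  using d_pos card_vertices_K_pos by (simp add: beta_K_def add_pos_nonneg)

lemma B_K_ge_1: "B_K \<ge> 1"
proof -
  have "(1::real) * 1 * 1 \<le> 2 * exp 1 * 2 ^ 2 ^ card (fst K)" by (intro mult_mono) auto
  then show ?thesis by (simp add: B_K_def)
qed

lemma C_K_pos: "C_K > 0"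
  using card_vertices_K_pos card_primal_pos B_K_ge_1 by (simp add: C_K_def)

definition primal_covers :: "('a graph \<times> 'a graph) set" where
  "primal_covers = {(G0, G1). primal_cover K G0 G1}"

lemma finite_primal_covers: "finite primal_covers"
  by (rule finite_subset[of _ "{J. primal J K} \<times> {J. primal J K}"])
    (auto simp: primal_covers_def primal_cover_def finite_primal)

definition typical :: "nat \<Rightarrow> real \<Rightarrow> nat set set \<Rightarrow> bool" where
  "typical n lam E \<longleftrightarrow> locally_sparse n E \<and> (\<forall>(G0, G1)\<in>primal_covers.
     \<not> disjoint_extensions n (nat \<lfloor>B_K * lam ^ (card (fst G1) - card (fst G0))\<rfloor> + 1) G0 G1 E)"

definition properties_i_to_v :: "nat \<Rightarrow> real \<Rightarrow> nat set set \<Rightarrow> bool" where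
  "properties_i_to_v n lam E \<longleftrightarrow>
     prop_i K n E \<and> prop_ii K n E \<and> prop_iii K B_K lam n E \<and> prop_iv K n E \<and> prop_v K C_K lam n E"

lemma properties_if_typical:
  assumes lam: "lam \<ge> 1" and E: "E \<subseteq> all_pairs n" and typical: "typical n lam E"
  shows "properties_i_to_v n lam E"
proof -
  have sparse: "locally_sparse n E" using typical by (simp add: typical_def)
  have ii: "prop_ii K n E" by (rule prop_ii_if_locally_sparse[OF sparse])
  have iii: "prop_iii K B_K lam n E" unfolding prop_iii_def
  proof (intro allI impI ballI)
    fix G0 G1 H0 assume cover: "primal_cover K G0 G1" and H0: "H0 \<in> copies G0 n E"
    define x where "x = B_K * lam ^ (card (fst G1) - card (fst G0))"
    show "real (card {H1 \<in> copies G1 n E. graph_le H0 H1}) \<le> x"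
    proof (rule ccontr)
      assume "\<not> ?thesis"
      moreover have "x \<ge> 0" using B_K_ge_1 lam by (simp add: x_def)
      ultimately have "nat \<lfloor>x\<rfloor> + 1 \<le> card {H1 \<in> copies G1 n E. graph_le H0 H1}"
        by linarith
      then have "disjoint_extensions n (nat \<lfloor>x\<rfloor> + 1) G0 G1 E"
        by (rule disjoint_extensions_if_many_extensions[OF E ii cover H0])
      moreover have "(G0, G1) \<in> primal_covers" using cover by (simp add: primal_covers_def)
      ultimately show False using typical by (auto simp: typical_def x_def)
    qed
  qed
  have iv: "prop_iv K n E" by (rule prop_iv_if_locally_sparse[OF sparse])
  have "prop_v K C_K lam n E"
    unfolding C_K_def by (rule prop_v_if_prop_iii_iv[OF iii iv B_K_ge_1 lam])
  then show ?thesis using prop_i_if_locally_sparse[OF sparse] ii iii iv by (simp add: properties_i_to_v_def)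
qed

lemma not_typical_prob_le:
  assumes p: "0 < p" "p \<le> 1" and lam: "lam = real n * p powr d" "lam \<ge> 1"
  shows "gnp_prob n p (\<lambda>E. \<not> typical n lam E)
    \<le> 2 ^ 2 ^ (2 * card (fst K)) * (\<Sum>k\<le>2 * card (fst K). real n ^ k * p powr (d * real k + 1 / real (card (fst K))))
      + (\<Sum>(G0, G1)\<in>primal_covers. 2 ^ 2 ^ card (fst G0) * lam ^ card (fst G0) * (1/2) powr lam)"
proof -
  let ?k = "\<lambda>G0 G1. nat \<lfloor>B_K * lam ^ (card (fst G1) - card (fst G0))\<rfloor> + 1"
  have "gnp_prob n p (\<lambda>E. \<not> typical n lam E) \<le> gnp_prob n p (\<lambda>E. \<not> locally_sparse n E)
      + gnp_prob n p (\<lambda>E. \<exists>(G0, G1)\<in>primal_covers. disjoint_extensions n (?k G0 G1) G0 G1 E)"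
    using p by (intro order_trans[OF gnp_prob_mono gnp_prob_disj_le]) (auto simp: typical_def)
  also have "gnp_prob n p (\<lambda>E. \<exists>(G0, G1)\<in>primal_covers. disjoint_extensions n (?k G0 G1) G0 G1 E)
      \<le> (\<Sum>(G0, G1)\<in>primal_covers. gnp_prob n p (disjoint_extensions n (?k G0 G1) G0 G1))"
    using gnp_prob_UN_le[OF _ p(2) finite_primal_covers, of n "\<lambda>(G0, G1). disjoint_extensions n (?k G0 G1) G0 G1"] p
    by (simp add: case_prod_unfold)
  also have "\<dots> \<le> (\<Sum>(G0, G1)\<in>primal_covers. 2 ^ 2 ^ card (fst G0) * lam ^ card (fst G0) * (1/2) powr lam)"
  proof (rule sum_mono, clarify)
    fix G0 G1 assume "(G0, G1) \<in> primal_covers"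
    then have cover: "primal_cover K G0 G1" by (simp add: primal_covers_def)
    then have "card (fst G1) \<le> card (fst K)" using primal_card_vertices_le by (simp add: primal_cover_def)
    then have "B_K \<ge> 2 * exp 1 * 2 ^ 2 ^ card (fst G1)" by (simp add: B_K_def power_increasing)
    then show "gnp_prob n p (disjoint_extensions n (?k G0 G1) G0 G1)
        \<le> 2 ^ 2 ^ card (fst G0) * lam ^ card (fst G0) * (1/2) powr lam"
      by (rule disjoint_extensions_prob_le_half_powr[OF cover p lam _ refl])
  qed
  finally show ?thesis using not_locally_sparse_prob_le[OF p, of n] by linarith
qed

lemma properties_whp:
  fixes p :: "nat \<Rightarrow> real"
  assumes p: "\<And>n. 0 \<le> p n \<and> p n \<le> 1" and lower: "(\<lambda>n. real n powr (- 1 / d)) \<in> o(p)"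
    and upper: "p \<in> O(\<lambda>n. real n powr (beta_K - 1 / d))"
  shows "(\<lambda>n. gnp_prob n (p n) (properties_i_to_v n (real n * p n powr d))) \<longlonglongrightarrow> 1"
proof -
  define lam where "lam n = real n * p n powr d" for n
  define bad where "bad n = 2 ^ 2 ^ (2 * card (fst K))
      * (\<Sum>k\<le>2 * card (fst K). real n ^ k * p n powr (d * real k + 1 / real (card (fst K))))
    + (\<Sum>(G0, G1)\<in>primal_covers. 2 ^ 2 ^ card (fst G0) * lam n ^ card (fst G0) * (1/2) powr lam n)" for n
  have lam_top: "filterlim lam at_top sequentially"
    unfolding lam_def using d_pos p lower by (intro n_mult_powr_tendsto_at_top) auto
  have bad: "bad \<longlonglongrightarrow> 0"
  proof -
    have "(\<lambda>n. \<Sum>k\<le>2 * card (fst K). real n ^ k * p n powr (d * real k + 1 / real (card (fst K)))) \<longlonglongrightarrow> 0"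
      using d_pos card_vertices_K_pos p upper[unfolded beta_K_def]
      by (intro tendsto_local_density_bound) (auto simp: Suc_le_eq)
    moreover have "(\<lambda>n. \<Sum>(G0, G1)\<in>primal_covers. 2 ^ 2 ^ card (fst G0) * lam n ^ card (fst G0) * (1/2) powr lam n)
        \<longlonglongrightarrow> 0"
      using tendsto_power_mult_half_powr[OF lam_top] by (intro tendsto_null_sum) (auto simp: case_prod_unfold)
    ultimately show ?thesis
      unfolding bad_def using tendsto_add[OF tendsto_mult_right_zero] by fastforce
  qed
  have "eventually (\<lambda>n. 1 - bad n \<le> gnp_prob n (p n) (properties_i_to_v n (real n * p n powr d)))
    sequentially"
    using eventually_pos_if_smallo[OF conjunct1[OF p] lower] lam_top[unfolded filterlim_at_top, rule_format, of 1]
  proof eventually_elim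
    case (elim n)
    then have pn: "0 < p n" "p n \<le> 1" and lam: "lam n = real n * p n powr d" "lam n \<ge> 1"
      using p by (auto simp: lam_def)
    have "1 - bad n \<le> 1 - gnp_prob n (p n) (\<lambda>E. \<not> typical n (lam n) E)"
      using not_typical_prob_le[OF pn lam] by (simp add: bad_def)
    also have "\<dots> = gnp_prob n (p n) (typical n (lam n))" by (rule gnp_prob_compl[symmetric])
    also have "\<dots> \<le> gnp_prob n (p n) (properties_i_to_v n (real n * p n powr d))"
      using pn properties_if_typical[OF lam(2)] lam(1) by (intro gnp_prob_mono) auto
    finally show ?case .
  qed
  moreover have "eventually (\<lambda>n. gnp_prob n (p n) (properties_i_to_v n (real n * p n powr d)) \<le> 1)
    sequentially"
    using p by (intro always_eventually allI gnp_prob_le_1) auto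
  moreover have "(\<lambda>n. 1 - bad n) \<longlonglongrightarrow> 1" using tendsto_diff[OF tendsto_const bad, of 1] by simp
  ultimately show ?thesis by (rule tendsto_sandwich[OF _ _ _ tendsto_const])
qed

end

theorem lemma19:
  fixes K :: "'a set \<times> 'a set set"
  assumes "graph K" and "balanced K" and "card (snd K) \<ge> 1"
  shows "\<exists>\<beta> B C :: real. \<beta> > 0 \<and> B > 0 \<and> C > 0 \<and>
    (\<forall>p :: nat \<Rightarrow> real. (\<forall>n. 0 \<le> p n \<and> p n \<le> 1) \<and>
       (\<lambda>n. real n powr (- 1 / dens K)) \<in> o(p) \<and>
       p \<in> O(\<lambda>n. real n powr (\<beta> - 1 / dens K)) \<longrightarrow>
       (\<lambda>n. gnp_prob n (p n) (\<lambda>E.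
          let lam = real n * p n powr dens K in
          prop_i K n E \<and> prop_ii K n E \<and> prop_iii K B lam n E \<and>
          prop_iv K n E \<and> prop_v K C lam n E)) \<longlonglongrightarrow> 1)"
proof -
  interpret balanced_graph K using assms by unfold_locales
  show ?thesis
    using beta_K_pos B_K_ge_1 C_K_pos properties_whp
    unfolding d_def properties_i_to_v_def Let_def by (intro exI[of _ beta_K] exI[of _ B_K] exI[of _ C_K]) auto
qed

end
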